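(* Fix $k,d\in\mathbb{N}=\{1,2,\dots\}$. Let $G$ be a graph with $\operatorname{tw}(G)\leq k-1$ and $\Delta(G)\leq d$. Then $G$ has a tree-partition $(B_x : x\in V(T))$ of width at most $18kd$ such that $\Delta(T)\leq 6d$. Moreover, for any set $S\subseteq V(G)$ with $4k\leq |S|\leq 12kd$, there exists a tree-partition $(B_x:x\in V(T))$ of $G$ of width at most $18kd$ such that $\Delta(T)\leq 6d$ and there exists a node $z\in V(T)$ such that: $S\subseteq B_z$; $|B_z|\leq \tfrac32|S|-2k$; and $\deg_T(z)\leq \tfrac{|S|}{2k}-1$.
   Context: All graphs are finite and simple. $\Delta(G)$ denotes the maximum degree of $G$, and $\operatorname{tw}(G)$ its treewidth. For a graph $G$ and a tree $T$, a $T$-partition of $G$ is a family $(B_x : x\in V(T))$ of pairwise disjoint subsets of $V(G)$ (some possibly empty) with union $V(G)$, indexed by the nodes of $T$, such that for every edge $vw$ of $G$, if $v\in B_x$ and $w\in B_y$ then $x=y$ or $xy\in E(T)$. A tree-partition of $G$ is a $T$-partition for some tree $T$. The width of a $T$-partition is $\max\{|B_x| : x\in V(T)\}$. *)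

theory Defs
  imports Complex_Main
begin

definition graph :: "'a set \<Rightarrow> 'a set set \<Rightarrow> bool" where
  "graph V E \<longleftrightarrow> finite V \<and> (\<forall>e\<in>E. \<exists>u v. e = {u, v} \<and> u \<noteq> v \<and> u \<in> V \<and> v \<in> V)"

definition degree :: "'a set set \<Rightarrow> 'a \<Rightarrow> nat" where
  "degree E v = card {u. {u, v} \<in> E}"

definition max_degree_le :: "'a set \<Rightarrow> 'a set set \<Rightarrow> nat \<Rightarrow> bool" where
  "max_degree_le V E d \<longleftrightarrow> (\<forall>v\<in>V. degree E v \<le> d)"

definition walk :: "'a set set \<Rightarrow> 'a list \<Rightarrow> bool" where
  "walk E xs \<longleftrightarrow> xs \<noteq> [] \<and> (\<forall>i. Suc i < length xs \<longrightarrow> {xs ! i, xs ! Suc i} \<in> E)"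

definition connected_set :: "'a set set \<Rightarrow> 'a set \<Rightarrow> bool" where
  "connected_set E X \<longleftrightarrow>
     (\<forall>u\<in>X. \<forall>v\<in>X. \<exists>xs. walk E xs \<and> set xs \<subseteq> X \<and> hd xs = u \<and> last xs = v)"

definition is_cycle :: "'a set set \<Rightarrow> 'a list \<Rightarrow> bool" where
  "is_cycle E xs \<longleftrightarrow> length xs \<ge> 3 \<and> distinct xs \<and> walk E xs \<and> {last xs, hd xs} \<in> E"

definition tree :: "'b set \<Rightarrow> 'b set set \<Rightarrow> bool" where
  "tree VT ET \<longleftrightarrow> graph VT ET \<and> VT \<noteq> {} \<and> connected_set ET VT \<and> (\<nexists>xs. is_cycle ET xs)"

definition tree_decomposition ::
  "'a set \<Rightarrow> 'a set set \<Rightarrow> 'b set \<Rightarrow> 'b set set \<Rightarrow> ('b \<Rightarrow> 'a set) \<Rightarrow> bool" where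
  "tree_decomposition V E VT ET W \<longleftrightarrow>
     tree VT ET \<and> (\<forall>x\<in>VT. W x \<subseteq> V) \<and>
     (\<forall>v\<in>V. \<exists>x\<in>VT. v \<in> W x) \<and>
     (\<forall>e\<in>E. \<exists>x\<in>VT. e \<subseteq> W x) \<and>
     (\<forall>v\<in>V. connected_set ET {x\<in>VT. v \<in> W x})"

text \<open>tw(G) \<le> w: there is a tree decomposition all of whose bags have size at most w+1.
  Tree nodes are taken to be natural numbers (every finite tree is isomorphic to one on nat).\<close>
definition treewidth_le :: "'a set \<Rightarrow> 'a set set \<Rightarrow> nat \<Rightarrow> bool" where
  "treewidth_le V E w \<longleftrightarrow>
     (\<exists>(VT::nat set) ET W. tree_decomposition V E VT ET W \<and> (\<forall>x\<in>VT. card (W x) \<le> w + 1))"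

definition T_partition ::
  "'a set \<Rightarrow> 'a set set \<Rightarrow> 'b set \<Rightarrow> 'b set set \<Rightarrow> ('b \<Rightarrow> 'a set) \<Rightarrow> bool" where
  "T_partition V E VT ET B \<longleftrightarrow>
     tree VT ET \<and>
     (\<forall>x\<in>VT. \<forall>y\<in>VT. x \<noteq> y \<longrightarrow> B x \<inter> B y = {}) \<and>
     (\<Union>x\<in>VT. B x) = V \<and>
     (\<forall>v w x y. {v, w} \<in> E \<longrightarrow> x \<in> VT \<longrightarrow> y \<in> VT \<longrightarrow> v \<in> B x \<longrightarrow> w \<in> B y \<longrightarrow>
        x = y \<or> {x, y} \<in> ET)"

definition width_le :: "'b set \<Rightarrow> ('b \<Rightarrow> 'a set) \<Rightarrow> nat \<Rightarrow> bool" where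
  "width_le VT B w \<longleftrightarrow> (\<forall>x\<in>VT. card (B x) \<le> w)"

end

theory Submission
  imports Defs
begin

text \<open>We prove, by induction on the number of vertices, a rooted version: for every anchor set S
  with 4k \<le> |S| \<le> 12kd there is such a tree-partition whose root bag contains S, has at most
  3|S|/2 - 2k vertices, and whose root has degree at most |S|/(2k) - 1.

  If |S| \<le> 12k, the root bag is S itself and its single child is the root of a partition of G - S
  anchored at the neighbourhood of S, which has at most d|S| \<le> 12kd vertices (padded to 4k vertices
  if needed).

  If |S| > 12k, a node of a tree decomposition of width < k whose removal leaves no branch
  carrying more than half of S gives, after grouping the branches, a separation (A, X, C) with
  |X| = k and at least 3k vertices of S on each side. The partitions of G[A \<union> X] and G[C \<union> X]
  anchored at (S \<inter> A) \<union> X and (S \<inter> C) \<union> X are glued at their roots; since X lies in both root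
  bags, the merged bag loses k vertices, which pays for the bounds.\<close>

section \<open>Walks and reachability\<close>

fun walk_edges :: "'b list \<Rightarrow> 'b set set" where
  "walk_edges (a # b # xs) = insert {a,b} (walk_edges (b # xs))"
| "walk_edges _ = {}"

lemma walk_edges_Cons: "xs \<noteq> [] \<Longrightarrow> walk_edges (a # xs) = insert {a, hd xs} (walk_edges xs)"
  by (cases xs) auto

lemma walk_edges_append:
  "xs \<noteq> [] \<Longrightarrow> ys \<noteq> [] \<Longrightarrow> walk_edges (xs @ ys) = walk_edges xs \<union> walk_edges ys \<union> {{last xs, hd ys}}"
  by (induction xs rule: walk_edges.induct) (auto simp: walk_edges_Cons)

lemma walk_edges_rev: "walk_edges (rev xs) = walk_edges xs"
proof (induction xs rule: walk_edges.induct)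
  case (1 a b xs)
  have "walk_edges (rev (a # b # xs)) = walk_edges (rev (b # xs) @ [a])"
    by simp
  also have "\<dots> = walk_edges (rev (b # xs)) \<union> {{b, a}}"
    by (subst walk_edges_append) (auto simp: last_rev)
  finally show ?case
    using 1 by (auto simp: insert_commute)
qed auto

lemma walk_edges_subset_set: "e \<in> walk_edges xs \<Longrightarrow> e \<subseteq> set xs"
  by (induction xs rule: walk_edges.induct) auto

lemma walk_iff_walk_edges: "walk E xs \<longleftrightarrow> xs \<noteq> [] \<and> walk_edges xs \<subseteq> E"
proof (induction xs rule: walk_edges.induct)
  case (1 a b xs)
  have "walk E (a # b # xs) \<longleftrightarrow> {a,b} \<in> E \<and> walk E (b # xs)"
    unfolding walk_def by (auto simp: less_Suc_eq_0_disj)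
  with 1 show ?case by simp
qed (auto simp: walk_def)

lemma walk_remove_loops:
  "walk E xs \<Longrightarrow> \<exists>ys. walk E ys \<and> distinct ys \<and> set ys \<subseteq> set xs \<and> hd ys = hd xs \<and> last ys = last xs"
proof (induction "length xs" arbitrary: xs rule: less_induct)
  case less
  show ?case
  proof (cases "distinct xs")
    case False
    then obtain as v bs cs where xs: "xs = as @ [v] @ bs @ [v] @ cs"
      using not_distinct_decomp by blast
    define xs' where "xs' = as @ [v] @ cs"
    have "walk_edges (as @ [v]) \<subseteq> walk_edges xs"
      using walk_edges_append[of "as @ [v]" "bs @ [v] @ cs"] unfolding xs by auto
    moreover have "walk_edges (v # cs) \<subseteq> walk_edges xs"
      using walk_edges_append[of "as @ [v] @ bs" "v # cs"] unfolding xs by auto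
    ultimately have "walk_edges xs' \<subseteq> walk_edges xs"
      using walk_edges_append[of "as @ [v]" cs] unfolding xs'_def
      by (cases "cs = []") (auto simp: walk_edges_Cons)
    then have "walk E xs'"
      using less.prems unfolding walk_iff_walk_edges xs'_def by auto
    moreover have "length xs' < length xs"
      unfolding xs xs'_def by simp
    ultimately obtain ys where "walk E ys" "distinct ys" "set ys \<subseteq> set xs'" "hd ys = hd xs'" "last ys = last xs'"
      using less.hyps by blast
    moreover have "set xs' \<subseteq> set xs" "hd xs' = hd xs" "last xs' = last xs"
      unfolding xs xs'_def by (auto simp: hd_append)
    ultimately show ?thesis by auto
  qed (use less.prems in blast)
qed

definition reachable :: "'b set set \<Rightarrow> 'b set \<Rightarrow> 'b \<Rightarrow> 'b \<Rightarrow> bool" where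
  "reachable E U a b \<longleftrightarrow> (\<exists>xs. walk E xs \<and> set xs \<subseteq> U \<and> hd xs = a \<and> last xs = b)"

lemma connected_set_iff_reachable: "connected_set E X \<longleftrightarrow> (\<forall>u\<in>X. \<forall>v\<in>X. reachable E X u v)"
  unfolding connected_set_def reachable_def by simp

lemma reachable_refl: "a \<in> U \<Longrightarrow> reachable E U a a"
  unfolding reachable_def by (rule exI[of _ "[a]"]) (simp add: walk_def)

lemma reachable_edge: "{a,b} \<in> E \<Longrightarrow> a \<in> U \<Longrightarrow> b \<in> U \<Longrightarrow> reachable E U a b"
  unfolding reachable_def by (rule exI[of _ "[a,b]"]) (simp add: walk_iff_walk_edges)

lemma reachable_endpoints: "reachable E U a b \<Longrightarrow> a \<in> U \<and> b \<in> U"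
  unfolding reachable_def walk_def by (metis hd_in_set last_in_set subsetD)

lemma reachable_trans:
  assumes "reachable E U a b" "reachable E U b c"
  shows "reachable E U a c"
proof -
  obtain xs where xs: "walk E xs" "set xs \<subseteq> U" "hd xs = a" "last xs = b"
    using assms(1) unfolding reachable_def by blast
  obtain ys where ys: "walk E ys" "set ys \<subseteq> U" "hd ys = b" "last ys = c"
    using assms(2) unfolding reachable_def by blast
  then obtain ys' where ys': "ys = b # ys'"
    by (cases ys) (auto simp: walk_def)
  show ?thesis
  proof (cases "ys' = []")
    case False
    then have "walk E (xs @ ys')"
      using xs ys ys' by (auto simp: walk_iff_walk_edges walk_edges_append walk_edges_Cons)
    then show ?thesis
      using xs ys ys' False unfolding reachable_def by (intro exI[of _ "xs @ ys'"]) (auto simp: walk_def)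
  qed (use xs ys ys' in \<open>auto simp: reachable_def\<close>)
qed

lemma reachable_sym: "reachable E U a b \<Longrightarrow> reachable E U b a"
  unfolding reachable_def
  by (metis walk_iff_walk_edges walk_edges_rev hd_rev last_rev set_rev rev_is_Nil_conv)

lemma reachable_mono: "reachable E U a b \<Longrightarrow> E \<subseteq> E' \<Longrightarrow> U \<subseteq> U' \<Longrightarrow> reachable E' U' a b"
  unfolding reachable_def walk_iff_walk_edges by blast

lemma reachable_inside: "reachable E U a b \<Longrightarrow> reachable (E \<inter> Pow U) U a b"
  unfolding reachable_def walk_iff_walk_edges using walk_edges_subset_set by blast

lemma reachable_walk_vertex:
  assumes "walk E xs" "set xs \<subseteq> U" "c \<in> set xs"
  shows "reachable E U (hd xs) c"
proof -
  obtain p q where xs: "xs = p @ c # q"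
    using assms(3) split_list by metis
  have "walk E (p @ [c])"
    using assms(1) unfolding xs
    by (cases "p = []"; cases q) (auto simp: walk_iff_walk_edges walk_edges_append walk_edges_Cons)
  then show ?thesis
    unfolding reachable_def using assms xs by (intro exI[of _ "p @ [c]"]) (cases p, auto)
qed

text \<open>Cut a walk from x to t at its last visit of x.\<close>
lemma reachable_last_exit:
  assumes "reachable E U x t" "t \<noteq> x"
  shows "\<exists>y. {x,y} \<in> E \<and> reachable E (U - {x}) y t"
proof -
  obtain xs where xs: "walk E xs" "set xs \<subseteq> U" "hd xs = x" "last xs = t"
    using assms(1) unfolding reachable_def by blast
  then have "x \<in> set xs"
    by (cases xs) (auto simp: walk_def)
  then obtain p q where pq: "xs = p @ x # q" "x \<notin> set q"
    using split_list_last by metis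
  have "q \<noteq> []"
    using pq xs assms(2) by auto
  moreover have "walk_edges (x # q) \<subseteq> E"
    using xs pq by (cases "p = []") (auto simp: walk_iff_walk_edges walk_edges_append)
  ultimately have "{x, hd q} \<in> E" "reachable E (U - {x}) (hd q) t"
    unfolding reachable_def using pq xs
    by (auto simp: walk_iff_walk_edges walk_edges_Cons intro!: exI[of _ q])
  then show ?thesis by blast
qed

section \<open>Trees\<close>

lemma graph_edge_ends: "graph V E \<Longrightarrow> {a,b} \<in> E \<Longrightarrow> a \<noteq> b \<and> a \<in> V \<and> b \<in> V"
  unfolding graph_def by (metis doubleton_eq_iff)

lemma graph_finite_neighbours: "graph V E \<Longrightarrow> finite {u. {u,v} \<in> E}"
proof -
  assume g: "graph V E"
  have "{u. {u,v} \<in> E} \<subseteq> V"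
    using graph_edge_ends[OF g] by auto
  then show ?thesis
    using g finite_subset unfolding graph_def by blast
qed

lemma tree_edge_is_bridge:
  assumes T: "tree VT ET" and e: "{x,y} \<in> ET"
  shows "\<not> reachable (ET - {{x,y}}) U y x"
proof
  assume "reachable (ET - {{x,y}}) U y x"
  then obtain xs where "walk (ET - {{x,y}}) xs" "hd xs = y" "last xs = x"
    unfolding reachable_def by blast
  then obtain ys where ys: "walk (ET - {{x,y}}) ys" "distinct ys" "hd ys = y" "last ys = x"
    using walk_remove_loops by metis
  have "x \<noteq> y"
    using graph_edge_ends[of VT ET x y] T e unfolding tree_def by blast
  with ys obtain a zs where ys_eq: "ys = y # a # zs"
    by (cases ys; cases "tl ys") (auto simp: walk_def)
  have "zs \<noteq> []"
  proof
    assume "zs = []"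
    then have "{y,x} \<in> ET - {{x,y}}"
      using ys ys_eq by (simp add: walk_iff_walk_edges)
    then show False
      by (simp add: insert_commute)
  qed
  then have "length ys \<ge> 3"
    using ys_eq by (cases zs) auto
  moreover have "walk ET ys"
    using ys(1) unfolding walk_iff_walk_edges by blast
  ultimately have "is_cycle ET ys"
    using ys e unfolding is_cycle_def by (auto simp: insert_commute)
  then show False
    using T unfolding tree_def by blast
qed

lemma tree_neighbours_separated:
  assumes T: "tree VT ET" and "{c,a} \<in> ET" "{c,b} \<in> ET" "a \<noteq> b"
  shows "\<not> reachable ET (VT - {c}) a b"
proof
  assume r: "reachable ET (VT - {c}) a b"
  then have "reachable (ET - {{c,a}}) UNIV a b"
    by (rule reachable_inside[THEN reachable_mono]) auto
  moreover have "reachable (ET - {{c,a}}) UNIV b c"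
    using assms reachable_endpoints[OF r] by (intro reachable_edge) (auto simp: insert_commute doubleton_eq_iff)
  ultimately have "reachable (ET - {{c,a}}) UNIV a c"
    by (rule reachable_trans)
  then show False
    using tree_edge_is_bridge[OF T \<open>{c,a} \<in> ET\<close>] by blast
qed

lemma is_cycle_iff_walk_edges:
  "is_cycle E xs \<longleftrightarrow> length xs \<ge> 3 \<and> distinct xs \<and> walk_edges (xs @ [hd xs]) \<subseteq> E"
  unfolding is_cycle_def walk_iff_walk_edges by (cases "xs = []") (auto simp: walk_edges_append)

lemma is_cycle_rotate1: "is_cycle E xs \<Longrightarrow> is_cycle E (rotate1 xs)"
proof -
  assume c: "is_cycle E xs"
  then obtain a ys where xs: "xs = a # ys" and ys: "ys \<noteq> []"
    unfolding is_cycle_def by (cases xs) force+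
  have "rotate1 xs @ [hd (rotate1 xs)] = ys @ [a, hd ys]"
    using xs ys by simp
  moreover have "walk_edges (ys @ [a, hd ys]) = walk_edges ys \<union> {{a, hd ys}} \<union> {{last ys, a}}"
    using walk_edges_append[OF ys, of "[a, hd ys]"] by simp
  moreover have "walk_edges (xs @ [hd xs]) = insert {a, hd ys} (walk_edges ys \<union> {{last ys, a}})"
    using xs ys walk_edges_Cons[of "ys @ [a]" a] walk_edges_append[OF ys, of "[a]"] by simp
  ultimately have "walk_edges (rotate1 xs @ [hd (rotate1 xs)]) = walk_edges (xs @ [hd xs])"
    by auto
  then show ?thesis
    using c unfolding is_cycle_iff_walk_edges by simp
qed

lemma is_cycle_rotate: "is_cycle E xs \<Longrightarrow> is_cycle E (rotate n xs)"
  by (induction n) (simp_all add: is_cycle_rotate1)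

lemma tree_singleton: "tree {r} {}"
proof -
  have "\<not> is_cycle {} xs" for xs :: "'a list"
  proof
    assume "is_cycle {} xs"
    then obtain a b ys where "xs = a # b # ys" "walk_edges (xs @ [hd xs]) \<subseteq> {}"
      unfolding is_cycle_iff_walk_edges by (cases xs; cases "tl xs") auto
    then show False by simp
  qed
  then show ?thesis
    unfolding tree_def graph_def connected_set_iff_reachable by (auto intro: reachable_refl)
qed

lemma connected_set_add_leaf:
  assumes "connected_set E V" "y \<in> V"
  shows "connected_set (insert {y,z} E) (insert z V)"
  unfolding connected_set_iff_reachable
proof (intro ballI)
  let ?E = "insert {y,z} E" and ?V = "insert z V"
  have old: "reachable ?E ?V a b" if "a \<in> V" "b \<in> V" for a b
  proof -
    have "reachable E V a b"
      using assms(1) that unfolding connected_set_iff_reachable by blast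
    then show ?thesis
      by (rule reachable_mono) auto
  qed
  have zy: "reachable ?E ?V z y"
    using assms by (intro reachable_edge) (auto simp: insert_commute)
  have new: "reachable ?E ?V z a" if "a \<in> ?V" for a
  proof (cases "a = z")
    case True
    then show ?thesis by (simp add: reachable_refl)
  next
    case False
    then have "reachable ?E ?V y a"
      using that old[OF \<open>y \<in> V\<close>] by blast
    with zy show ?thesis
      by (rule reachable_trans)
  qed
  fix u v assume "u \<in> ?V" "v \<in> ?V"
  then consider "u \<in> V" "v \<in> V" | "u = z" | "v = z"
    by blast
  then show "reachable ?E ?V u v"
  proof cases
    case 1
    then show ?thesis by (rule old)
  next
    case 2
    then show ?thesis using new \<open>v \<in> ?V\<close> by simp
  next
    case 3
    then show ?thesis using new[OF \<open>u \<in> ?V\<close>] by (simp add: reachable_sym)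
  qed
qed

lemma not_is_cycle_add_leaf:
  assumes acyclic: "\<And>xs. \<not> is_cycle E xs" and E: "\<forall>e\<in>E. e \<subseteq> V" and z: "z \<notin> V"
  shows "\<not> is_cycle (insert {y,z} E) xs"
proof
  let ?E = "insert {y,z} E"
  assume c: "is_cycle ?E xs"
  show False
  proof (cases "z \<in> set xs")
    case False
    have "xs \<noteq> []"
      using c unfolding is_cycle_def by auto
    then have "set (xs @ [hd xs]) \<subseteq> set xs"
      by (cases xs) auto
    then have "e \<noteq> {y,z}" if "e \<in> walk_edges (xs @ [hd xs])" for e
      using walk_edges_subset_set[OF that] False by auto
    then have "walk_edges (xs @ [hd xs]) \<subseteq> E"
      using c unfolding is_cycle_iff_walk_edges by blast
    then have "is_cycle E xs"
      using c unfolding is_cycle_iff_walk_edges by blast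
    then show False
      using acyclic by blast
  next
    case True
    txt \<open>Rotate the cycle to start at the leaf z: both its cycle neighbours must then be y.\<close>
    then obtain i where i: "i < length xs" "xs ! i = z"
      by (metis in_set_conv_nth)
    let ?ys = "rotate i xs"
    have c': "is_cycle ?E ?ys"
      using c is_cycle_rotate by blast
    have hz: "hd ?ys = z"
      using i hd_rotate_conv_nth[of xs i] by (cases xs) auto
    have l: "length ?ys \<ge> 3"
      using c' unfolding is_cycle_def by blast
    obtain p q where pq: "?ys = p # q" using l by (cases ?ys) auto
    obtain a q' where aq: "q = a # q'" using l pq by (cases q) auto
    obtain zs b where zb: "q' = zs @ [b]" using l pq aq by (cases q' rule: rev_cases) auto
    have ys: "?ys = z # a # zs @ [b]"
      using pq aq zb hz by simp
    have cyc: "walk_edges (?ys @ [hd ?ys]) \<subseteq> ?E" and dist: "distinct ?ys"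
      using c' unfolding is_cycle_iff_walk_edges by auto
    have "{z,a} \<in> walk_edges (?ys @ [hd ?ys])"
      unfolding ys by simp
    moreover have "{b,z} \<in> walk_edges (?ys @ [hd ?ys])"
      using walk_edges_append[of "z # a # zs @ [b]" "[z]"] unfolding ys by simp
    ultimately have "{z,a} \<in> ?E" "{b,z} \<in> ?E"
      using cyc by blast+
    then have "a = y" "b = y"
      using E z by (auto simp: doubleton_eq_iff)
    then show False
      using dist ys by auto
  qed
qed

text \<open>Trees grown from the root r by attaching one leaf at a time. Unlike the predicate tree,
  this inductive description is easily seen to survive gluing at a vertex and relabelling.\<close>
inductive leaf_tree :: "'b \<Rightarrow> 'b set \<Rightarrow> 'b set set \<Rightarrow> bool" where
  single: "leaf_tree r {r} {}"
| add_leaf: "leaf_tree r V E \<Longrightarrow> y \<in> V \<Longrightarrow> z \<notin> V \<Longrightarrow> leaf_tree r (insert z V) (insert {y,z} E)"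

lemma leaf_tree_graph: "leaf_tree r V E \<Longrightarrow> r \<in> V \<and> graph V E"
proof (induction rule: leaf_tree.induct)
  case (add_leaf r V E y z)
  then show ?case
    unfolding graph_def by (metis finite_insert insert_iff)
qed (simp add: graph_def)

lemma leaf_tree_tree: "leaf_tree r V E \<Longrightarrow> tree V E"
proof (induction rule: leaf_tree.induct)
  case (single r)
  show ?case by (rule tree_singleton)
next
  case (add_leaf r V E y z)
  have "graph (insert z V) (insert {y,z} E)"
    using leaf_tree_graph[OF leaf_tree.add_leaf[OF add_leaf.hyps]] by blast
  moreover have "connected_set (insert {y,z} E) (insert z V)"
    using add_leaf.IH \<open>y \<in> V\<close> unfolding tree_def by (blast intro: connected_set_add_leaf)
  moreover have "\<not> is_cycle (insert {y,z} E) xs" for xs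
  proof (rule not_is_cycle_add_leaf)
    show "\<not> is_cycle E xs" for xs
      using add_leaf.IH unfolding tree_def by blast
    show "\<forall>e\<in>E. e \<subseteq> V"
      using add_leaf.IH unfolding tree_def graph_def by fastforce
  qed (rule \<open>z \<notin> V\<close>)
  ultimately show ?case
    unfolding tree_def by simp
qed

lemma leaf_tree_glue:
  "leaf_tree s V2 E2 \<Longrightarrow> leaf_tree r V1 E1 \<Longrightarrow> V1 \<inter> V2 = {s} \<Longrightarrow> leaf_tree r (V1 \<union> V2) (E1 \<union> E2)"
proof (induction arbitrary: V1 E1 rule: leaf_tree.induct)
  case (single s)
  then have "s \<in> V1" by blast
  with single show ?case by (simp add: insert_absorb)
next
  case (add_leaf s V E y z)
  have "s \<in> V"
    using leaf_tree_graph[OF add_leaf.hyps(1)] by blast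
  then have "leaf_tree r (V1 \<union> V) (E1 \<union> E)" "z \<notin> V1 \<union> V"
    using add_leaf by auto
  then show ?case
    using leaf_tree.add_leaf[of r "V1 \<union> V" "E1 \<union> E" y z] add_leaf.hyps(2) by simp
qed

lemma leaf_tree_image: "leaf_tree r V E \<Longrightarrow> inj f \<Longrightarrow> leaf_tree (f r) (f ` V) ((`) f ` E)"
proof (induction rule: leaf_tree.induct)
  case (single r)
  show ?case using leaf_tree.single by simp
next
  case (add_leaf r V E y z)
  then show ?case
    using leaf_tree.add_leaf[of "f r" "f ` V" "(`) f ` E" "f y" "f z"] by (simp add: inj_image_mem_iff)
qed

section \<open>Balanced separations from tree decompositions\<close>

definition parts_separation :: "'a set \<Rightarrow> 'a set set \<Rightarrow> 'a set \<Rightarrow> 'i set \<Rightarrow> ('i \<Rightarrow> 'a set) \<Rightarrow> bool" where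
  "parts_separation V E X I P \<longleftrightarrow> finite I \<and> (\<Union>i\<in>I. P i) = V - X
     \<and> (\<forall>i\<in>I. \<forall>j\<in>I. i \<noteq> j \<longrightarrow> P i \<inter> P j = {})
     \<and> (\<forall>u w i j. {u,w} \<in> E \<longrightarrow> i \<in> I \<longrightarrow> j \<in> I \<longrightarrow> u \<in> P i \<longrightarrow> w \<in> P j \<longrightarrow> i = j)"

locale tree_decomposed_graph =
  fixes V :: "'a set" and E :: "'a set set" and VT :: "'b set" and ET :: "'b set set" and W :: "'b \<Rightarrow> 'a set"
  assumes tree_decomposition: "tree_decomposition V E VT ET W"
begin

lemma tree: "tree VT ET"
  using tree_decomposition unfolding tree_decomposition_def by blast

lemma finite_VT: "finite VT"
  using tree unfolding tree_def graph_def by blast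

lemma tree_edge: "{x,y} \<in> ET \<Longrightarrow> x \<in> VT \<and> y \<in> VT \<and> x \<noteq> y"
  using graph_edge_ends[of VT ET x y] tree unfolding tree_def by blast

definition branch :: "'b \<Rightarrow> 'b \<Rightarrow> 'b set" where
  "branch x y = {t. reachable ET (VT - {x}) y t}"

definition part :: "'b \<Rightarrow> 'b \<Rightarrow> 'a set" where
  "part x y = (\<Union>t\<in>branch x y. W t) - W x"

lemma branch_subset: "branch x y \<subseteq> VT - {x}"
  using reachable_endpoints unfolding branch_def by fast

lemma self_in_branch: "{x,y} \<in> ET \<Longrightarrow> y \<in> branch x y"
  using tree_edge unfolding branch_def by (auto intro: reachable_refl)

lemma part_subset: "part x y \<subseteq> V - W x"
  using tree_decomposition branch_subset unfolding part_def tree_decomposition_def by blast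

lemma in_partI: "t \<in> branch x y \<Longrightarrow> u \<in> W t \<Longrightarrow> u \<notin> W x \<Longrightarrow> u \<in> part x y"
  unfolding part_def by blast

lemma exists_branch:
  assumes "x \<in> VT" "t \<in> VT" "t \<noteq> x"
  shows "\<exists>y. {x,y} \<in> ET \<and> t \<in> branch x y"
proof -
  have "reachable ET VT x t"
    using tree assms unfolding tree_def connected_set_iff_reachable by blast
  then show ?thesis
    using reachable_last_exit assms(3) unfolding branch_def by fastforce
qed

lemma reachable_avoiding_bag:
  assumes "v \<in> W a" "v \<in> W b" "a \<in> VT" "b \<in> VT" "v \<notin> W x"
  shows "reachable ET (VT - {x}) a b"
proof -
  have "v \<in> V"
    using tree_decomposition assms unfolding tree_decomposition_def by blast
  then have "reachable ET {t\<in>VT. v \<in> W t} a b"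
    using tree_decomposition assms unfolding tree_decomposition_def connected_set_iff_reachable by blast
  then show ?thesis
    by (rule reachable_mono) (use assms in auto)
qed

lemma part_disjoint:
  assumes "{x,y} \<in> ET" "{x,y'} \<in> ET" "y \<noteq> y'"
  shows "part x y \<inter> part x y' = {}"
proof (rule ccontr)
  assume "part x y \<inter> part x y' \<noteq> {}"
  then obtain v a b where v: "a \<in> branch x y" "v \<in> W a" "b \<in> branch x y'" "v \<in> W b" "v \<notin> W x"
    unfolding part_def by blast
  then have "reachable ET (VT - {x}) a b"
    using reachable_avoiding_bag branch_subset by blast
  moreover have "reachable ET (VT - {x}) y a" "reachable ET (VT - {x}) b y'"
    using v reachable_sym unfolding branch_def by auto
  ultimately have "reachable ET (VT - {x}) y y'"
    using reachable_trans by metis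
  then show False
    using tree_neighbours_separated[OF tree assms] by blast
qed

lemma part_disjoint_opposite:
  assumes e: "{x,y} \<in> ET"
  shows "part x y \<inter> part y x = {}"
proof (rule ccontr)
  assume "part x y \<inter> part y x \<noteq> {}"
  then obtain v a b where v: "a \<in> branch x y" "v \<in> W a" "b \<in> branch y x" "v \<in> W b" "v \<notin> W x" "v \<notin> W y"
    unfolding part_def by blast
  then have "reachable ET (VT - {x}) a b"
    using reachable_avoiding_bag branch_subset by blast
  moreover have "reachable ET (VT - {x}) y a"
    using v unfolding branch_def by blast
  ultimately have "reachable ET (VT - {x}) y b"
    using reachable_trans by metis
  then have "reachable (ET - {{x,y}}) UNIV y b"
    by (rule reachable_inside[THEN reachable_mono]) auto
  moreover have "reachable ET (VT - {y}) b x"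
    using v reachable_sym unfolding branch_def by fast
  then have "reachable (ET - {{x,y}}) UNIV b x"
    by (rule reachable_inside[THEN reachable_mono]) auto
  ultimately show False
    using tree_edge_is_bridge[OF tree e] reachable_trans by metis
qed

lemma part_cover:
  assumes "x \<in> VT" "v \<in> V" "v \<notin> W x"
  shows "\<exists>y. {x,y} \<in> ET \<and> v \<in> part x y"
proof -
  obtain t where t: "t \<in> VT" "v \<in> W t"
    using tree_decomposition assms(2) unfolding tree_decomposition_def by blast
  then have "t \<noteq> x"
    using assms(3) by blast
  then obtain y where "{x,y} \<in> ET" "t \<in> branch x y"
    using exists_branch[OF assms(1) t(1)] by blast
  then show ?thesis
    using in_partI t(2) assms(3) by blast
qed

lemma edge_within_part:
  assumes "x \<in> VT" "{u,w} \<in> E" "{x,y} \<in> ET" "{x,y'} \<in> ET" "u \<in> part x y" "w \<in> part x y'"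
  shows "y = y'"
proof -
  obtain t where t: "t \<in> VT" "{u,w} \<subseteq> W t"
    using tree_decomposition assms(2) unfolding tree_decomposition_def by blast
  moreover have "u \<notin> W x" "w \<notin> W x"
    using assms unfolding part_def by auto
  moreover from this have "t \<noteq> x"
    using t by blast
  then obtain y'' where "{x,y''} \<in> ET" "t \<in> branch x y''"
    using exists_branch[OF assms(1) t(1)] by blast
  ultimately have "{x,y''} \<in> ET" "u \<in> part x y''" "w \<in> part x y''"
    using in_partI by auto
  then show ?thesis
    using part_disjoint assms by blast
qed

lemma parts_separation_at:
  assumes x: "x \<in> VT"
  shows "parts_separation V E (W x) {y. {x,y} \<in> ET} (part x)"
  unfolding parts_separation_def
proof (intro conjI allI ballI impI)
  show "finite {y. {x,y} \<in> ET}"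
    using tree_edge by (blast intro: finite_subset[OF _ finite_VT])
  show "(\<Union>y\<in>{y. {x,y} \<in> ET}. part x y) = V - W x"
    using part_subset part_cover[OF x] by blast
  show "part x y \<inter> part x y' = {}" if "y \<in> {y. {x,y} \<in> ET}" "y' \<in> {y. {x,y} \<in> ET}" "y \<noteq> y'" for y y'
    using part_disjoint that by blast
  show "y = y'" if "{u,w} \<in> E" "y \<in> {y. {x,y} \<in> ET}" "y' \<in> {y. {x,y} \<in> ET}"
    "u \<in> part x y" "w \<in> part x y'" for u w y y'
    using edge_within_part[OF x] that by blast
qed

lemma branch_psubset:
  assumes e: "{x,y} \<in> ET" and e': "{y,y'} \<in> ET" and "y' \<noteq> x"
  shows "branch y y' \<subset> branch x y"
proof
  show "branch y y' \<subseteq> branch x y"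
  proof
    fix t assume "t \<in> branch y y'"
    then obtain xs where xs: "walk ET xs" "set xs \<subseteq> VT - {y}" "hd xs = y'" "last xs = t"
      unfolding branch_def reachable_def by blast
    have "x \<notin> set xs"
    proof
      assume "x \<in> set xs"
      then have "reachable ET (VT - {y}) y' x"
        using reachable_walk_vertex[OF xs(1,2)] xs(3) by metis
      moreover have "{y,x} \<in> ET"
        using e by (simp add: insert_commute)
      ultimately show False
        using tree_neighbours_separated[OF tree e' _ \<open>y' \<noteq> x\<close>] by blast
    qed
    then have "reachable ET (VT - {x}) y' t"
      unfolding reachable_def using xs by blast
    moreover have "reachable ET (VT - {x}) y y'"
      using tree_edge[OF e] tree_edge[OF e'] \<open>y' \<noteq> x\<close> e' by (intro reachable_edge) auto
    ultimately show "t \<in> branch x y"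
      using reachable_trans unfolding branch_def by fast
  qed
  show "branch y y' \<noteq> branch x y"
    using self_in_branch[OF e] branch_subset[of y y'] by blast
qed

text \<open>A counterexample edge (x,y) with the smallest branch is impossible: from y, every part
  other than the one towards x lies inside part x y, and that one is disjoint from part x y.\<close>
lemma balanced_node:
  assumes "finite S"
  shows "\<exists>x\<in>VT. \<forall>y. {x,y} \<in> ET \<longrightarrow> 2 * card (S \<inter> part x y) \<le> card S"
proof (cases "\<exists>x y. {x,y} \<in> ET \<and> card S < 2 * card (S \<inter> part x y)")
  case False
  moreover have "VT \<noteq> {}"
    using tree unfolding tree_def by blast
  ultimately show ?thesis
    by (meson ex_in_conv not_le)
next
  case True
  then obtain x0 y0 where "{x0,y0} \<in> ET \<and> card S < 2 * card (S \<inter> part x0 y0)"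
    by blast
  then obtain x y where xy: "{x,y} \<in> ET" "card S < 2 * card (S \<inter> part x y)"
    and minimal: "\<And>x' y'. {x',y'} \<in> ET \<Longrightarrow> card S < 2 * card (S \<inter> part x' y')
      \<Longrightarrow> card (branch x y) \<le> card (branch x' y')"
    using ex_has_least_nat[where P = "\<lambda>(x,y). {x,y} \<in> ET \<and> card S < 2 * card (S \<inter> part x y)"
        and m = "\<lambda>(x,y). card (branch x y)" and k = "(x0,y0)"] by auto
  have "2 * card (S \<inter> part y y') \<le> card S" if e': "{y,y'} \<in> ET" for y'
  proof (cases "y' = x")
    case True
    have "card (S \<inter> part x y) + card (S \<inter> part y x) = card ((S \<inter> part x y) \<union> (S \<inter> part y x))"
      using part_disjoint_opposite[OF xy(1)] assms by (intro card_Un_disjoint[symmetric]) auto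
    also have "\<dots> \<le> card S"
      using assms by (intro card_mono) auto
    finally show ?thesis
      using True xy(2) by simp
  next
    case False
    have "finite (branch x y)"
      using branch_subset finite_VT finite_subset by blast
    then have "card (branch y y') < card (branch x y)"
      using psubset_card_mono branch_psubset[OF xy(1) e' False] by blast
    then show ?thesis
      using minimal[OF e'] by fastforce
  qed
  then show ?thesis
    using tree_edge[OF xy(1)] by blast
qed

end

lemma exists_subset_sum_between:
  fixes s :: "'i \<Rightarrow> nat"
  assumes "finite I" "\<forall>i\<in>I. s i \<le> M" "0 < c" "c \<le> sum s I"
  shows "\<exists>J\<subseteq>I. c \<le> sum s J \<and> sum s J < c + M"
  using assms
proof (induction I rule: finite_induct)
  case (insert a I)
  show ?case
  proof (cases "c \<le> sum s I")
    case True
    then show ?thesis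
      using insert by (meson insert_iff subset_insertI2)
  next
    case False
    then show ?thesis
      using insert by (intro exI[of _ "insert a I"]) auto
  qed
qed simp

lemma balanced_index_subset:
  fixes s :: "'i \<Rightarrow> nat"
  assumes "finite I" "\<forall>i\<in>I. 2 * s i \<le> n" "n \<le> sum s I + k" "10 * k \<le> n" "k \<ge> 1"
  shows "\<exists>J\<subseteq>I. 3 * k \<le> sum s J \<and> sum s J + 3 * k \<le> sum s I"
proof (cases "\<exists>i\<in>I. 3 * k \<le> s i")
  case True
  then obtain i where "i \<in> I" "3 * k \<le> s i"
    by blast
  moreover have "sum s I = s i + sum s (I - {i})"
    using assms(1) \<open>i \<in> I\<close> by (simp add: sum.remove)
  ultimately show ?thesis
    using assms by (intro exI[of _ "{i}"]) force
next
  case False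
  then obtain J where "J \<subseteq> I" "3 * k \<le> sum s J" "sum s J < 3 * k + 3 * k"
    using exists_subset_sum_between[OF assms(1), of s "3 * k" "3 * k"] assms by fastforce
  then show ?thesis
    using assms by (intro exI[of _ J]) auto
qed

definition separation :: "'a set \<Rightarrow> 'a set set \<Rightarrow> 'a set \<Rightarrow> 'a set \<Rightarrow> 'a set \<Rightarrow> bool" where
  "separation V E A X C \<longleftrightarrow> A \<inter> X = {} \<and> C \<inter> X = {} \<and> A \<inter> C = {} \<and> A \<union> X \<union> C = V
     \<and> (\<forall>u w. {u,w} \<in> E \<longrightarrow> u \<in> A \<longrightarrow> w \<notin> C)"

lemma parts_separation_shrink:
  assumes "parts_separation V E X I P"
  shows "parts_separation V E (X \<union> Z) I (\<lambda>i. P i - Z)"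
proof -
  have "(\<Union>i\<in>I. P i - Z) = (\<Union>i\<in>I. P i) - Z"
    by blast
  then show ?thesis
    using assms unfolding parts_separation_def by (simp add: Diff_Un) blast
qed

lemma separation_group_parts:
  assumes sep: "parts_separation V E X I P" and "X \<subseteq> V" "J \<subseteq> I"
  shows "separation V E (\<Union>i\<in>J. P i) X (\<Union>i\<in>I - J. P i)"
proof -
  let ?A = "\<Union>i\<in>J. P i" and ?C = "\<Union>i\<in>I - J. P i"
  have cover: "(\<Union>i\<in>I. P i) = V - X"
    and disj: "\<forall>i\<in>I. \<forall>j\<in>I. i \<noteq> j \<longrightarrow> P i \<inter> P j = {}"
    and edges: "\<forall>u w i j. {u,w} \<in> E \<longrightarrow> i \<in> I \<longrightarrow> j \<in> I \<longrightarrow> u \<in> P i \<longrightarrow> w \<in> P j \<longrightarrow> i = j"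
    using sep unfolding parts_separation_def by auto
  have "?A \<union> ?C = (\<Union>i\<in>J \<union> (I - J). P i)"
    by (rule UN_Un[symmetric])
  also have "J \<union> (I - J) = I"
    using assms(3) by blast
  finally have "?A \<union> ?C = V - X"
    using cover by simp
  then have "?A \<inter> X = {}" "?C \<inter> X = {}" "?A \<union> X \<union> ?C = V"
    using \<open>X \<subseteq> V\<close> by blast+
  moreover have "?A \<inter> ?C = {}"
  proof (rule ccontr)
    assume "?A \<inter> ?C \<noteq> {}"
    then obtain i j where "i \<in> J" "j \<in> I - J" "P i \<inter> P j \<noteq> {}"
      by blast
    moreover from this have "i \<in> I" "j \<in> I" "i \<noteq> j"
      using assms(3) by auto
    ultimately show False
      using disj by blast
  qed
  moreover have "w \<notin> ?C" if "{u,w} \<in> E" "u \<in> ?A" for u w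
  proof
    assume "w \<in> ?C"
    then obtain i j where "i \<in> J" "j \<in> I - J" "u \<in> P i" "w \<in> P j"
      using \<open>u \<in> ?A\<close> by blast
    then show False
      using edges \<open>{u,w} \<in> E\<close> assms(3) by blast
  qed
  ultimately show ?thesis
    unfolding separation_def by blast
qed

lemma card_Int_UN_parts:
  assumes "parts_separation V E X I P" "finite S" "J \<subseteq> I"
  shows "card (S \<inter> (\<Union>i\<in>J. P i)) = (\<Sum>i\<in>J. card (S \<inter> P i))"
proof -
  have "\<forall>i\<in>J. \<forall>j\<in>J. i \<noteq> j \<longrightarrow> (S \<inter> P i) \<inter> (S \<inter> P j) = {}"
    using assms(1,3) unfolding parts_separation_def by blast
  moreover have "finite J"
    using assms(1,3) finite_subset unfolding parts_separation_def by blast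
  ultimately have "card (\<Union>i\<in>J. S \<inter> P i) = (\<Sum>i\<in>J. card (S \<inter> P i))"
    using assms(2) by (intro card_UN_disjoint) simp_all
  moreover have "S \<inter> (\<Union>i\<in>J. P i) = (\<Union>i\<in>J. S \<inter> P i)"
    by blast
  ultimately show ?thesis
    by (simp only:)
qed

text \<open>Pad the separator with k - |X0| vertices of S, then group the parts into two sides,
  each carrying at least 3k vertices of S.\<close>
lemma balanced_separation:
  assumes sep: "parts_separation V E X0 I P" and "finite V" and "X0 \<subseteq> V" "card X0 \<le> k" "k \<ge> 1"
    and half: "\<forall>i\<in>I. 2 * card (S \<inter> P i) \<le> card S" and "S \<subseteq> V" and "10 * k \<le> card S"
  shows "\<exists>X A C. X \<subseteq> V \<and> card X = k \<and> separation V E A X C \<and> 3*k \<le> card (S \<inter> A) \<and> 3*k \<le> card (S \<inter> C)"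
proof -
  have finS: "finite S" and finX0: "finite X0"
    using assms(2,3,7) finite_subset by blast+
  have I: "finite I"
    using sep unfolding parts_separation_def by simp
  have "card S \<le> card (S - X0) + card X0"
    using card_Un_le[of "S - X0" X0] card_mono[of "(S - X0) \<union> X0" S] finS finX0 by auto
  then have "k - card X0 \<le> card (S - X0)"
    using assms by linarith
  then obtain Z where Z: "Z \<subseteq> S - X0" "card Z = k - card X0"
    by (rule obtain_subset_with_card_n)
  define X where "X = X0 \<union> Z"
  have finZ: "finite Z"
    using Z finS finite_subset by blast
  have XV: "X \<subseteq> V"
    using Z \<open>X0 \<subseteq> V\<close> \<open>S \<subseteq> V\<close> unfolding X_def by blast
  have cX: "card X = k"
    using Z \<open>card X0 \<le> k\<close> card_Un_disjoint[OF finX0 finZ] unfolding X_def by auto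
  have finX: "finite X"
    using finZ finX0 unfolding X_def by blast
  define Q where "Q i = P i - Z" for i
  have sep': "parts_separation V E X I Q"
    unfolding X_def Q_def using parts_separation_shrink[OF sep] .
  define s where "s i = card (S \<inter> Q i)" for i
  have card_S_UN: "card (S \<inter> (\<Union>i\<in>J. Q i)) = sum s J" if "J \<subseteq> I" for J
    unfolding s_def using card_Int_UN_parts[OF sep' finS that] .
  have "card S \<le> card (S - X) + card X"
    using card_Un_le[of "S - X" X] card_mono[of "(S - X) \<union> X" S] finS finX by auto
  moreover have "S \<inter> (\<Union>i\<in>I. Q i) = S - X"
    using sep' \<open>S \<subseteq> V\<close> unfolding parts_separation_def by blast
  then have "card (S - X) = sum s I"
    using card_S_UN[of I] by simp
  ultimately have "card S \<le> sum s I + k"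
    using cX by linarith
  moreover have "\<forall>i\<in>I. 2 * s i \<le> card S"
  proof
    fix i assume "i \<in> I"
    have "s i \<le> card (S \<inter> P i)"
      unfolding s_def Q_def using finS by (intro card_mono) auto
    then show "2 * s i \<le> card S"
      using half \<open>i \<in> I\<close> by fastforce
  qed
  ultimately obtain J where J: "J \<subseteq> I" "3*k \<le> sum s J" "sum s J + 3*k \<le> sum s I"
    using balanced_index_subset[OF I _ _ \<open>10 * k \<le> card S\<close> \<open>k \<ge> 1\<close>] by blast
  have "card (S \<inter> (\<Union>i\<in>J. Q i)) = sum s J" "card (S \<inter> (\<Union>i\<in>I - J. Q i)) = sum s (I - J)"
    using card_S_UN J(1) by blast+
  moreover have "sum s I = sum s (I - J) + sum s J"
    using sum.subset_diff[OF J(1) I] .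
  ultimately have "3*k \<le> card (S \<inter> (\<Union>i\<in>J. Q i))" "3*k \<le> card (S \<inter> (\<Union>i\<in>I - J. Q i))"
    using J by linarith+
  then show ?thesis
    using XV cX separation_group_parts[OF sep' XV J(1)] by blast
qed

section \<open>Induced subgraphs\<close>

definition induced :: "'a set set \<Rightarrow> 'a set \<Rightarrow> 'a set set" where
  "induced E U = {e\<in>E. e \<subseteq> U}"

definition bounded_graph :: "'a set \<Rightarrow> 'a set set \<Rightarrow> nat \<Rightarrow> nat \<Rightarrow> bool" where
  "bounded_graph V E k d \<longleftrightarrow> graph V E \<and> treewidth_le V E (k - 1) \<and> max_degree_le V E d"

lemma graph_induced:
  assumes "graph V E" "U \<subseteq> V"
  shows "graph U (induced E U)"
  unfolding graph_def
proof
  show "finite U"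
    using assms finite_subset unfolding graph_def by blast
  show "\<forall>e\<in>induced E U. \<exists>u v. e = {u,v} \<and> u \<noteq> v \<and> u \<in> U \<and> v \<in> U"
  proof
    fix e assume "e \<in> induced E U"
    then have "e \<in> E" "e \<subseteq> U"
      unfolding induced_def by auto
    then obtain u v where "e = {u,v}" "u \<noteq> v"
      using assms unfolding graph_def by blast
    with \<open>e \<subseteq> U\<close> show "\<exists>u v. e = {u,v} \<and> u \<noteq> v \<and> u \<in> U \<and> v \<in> U"
      by blast
  qed
qed

lemma max_degree_le_induced:
  assumes "graph V E" "max_degree_le V E d" "U \<subseteq> V"
  shows "max_degree_le U (induced E U) d"
  unfolding max_degree_le_def
proof
  fix v assume "v \<in> U"
  have "degree (induced E U) v \<le> degree E v"
    unfolding degree_def induced_def using graph_finite_neighbours[OF assms(1)] by (intro card_mono) auto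
  also have "\<dots> \<le> d"
    using assms \<open>v \<in> U\<close> unfolding max_degree_le_def by blast
  finally show "degree (induced E U) v \<le> d" .
qed

lemma tree_decomposition_induced:
  assumes td: "tree_decomposition V E VT ET W" and "U \<subseteq> V"
  shows "tree_decomposition U (induced E U) VT ET (\<lambda>t. W t \<inter> U)"
  unfolding tree_decomposition_def
proof (intro conjI ballI)
  show "tree VT ET"
    using td unfolding tree_decomposition_def by blast
  show "W x \<inter> U \<subseteq> U" for x
    by blast
  show "\<exists>x\<in>VT. v \<in> W x \<inter> U" if "v \<in> U" for v
    using td that \<open>U \<subseteq> V\<close> unfolding tree_decomposition_def by blast
  show "\<exists>x\<in>VT. e \<subseteq> W x \<inter> U" if "e \<in> induced E U" for e
  proof -
    have "e \<in> E" "e \<subseteq> U"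
      using that unfolding induced_def by simp_all
    moreover have "\<forall>e\<in>E. \<exists>x\<in>VT. e \<subseteq> W x"
      using td unfolding tree_decomposition_def by simp
    ultimately show ?thesis
      by (meson le_inf_iff)
  qed
  show "connected_set ET {x\<in>VT. v \<in> W x \<inter> U}" if "v \<in> U" for v
  proof -
    have "connected_set ET {x\<in>VT. v \<in> W x}"
      using td that \<open>U \<subseteq> V\<close> unfolding tree_decomposition_def by blast
    moreover have "{x\<in>VT. v \<in> W x \<inter> U} = {x\<in>VT. v \<in> W x}"
      using that by blast
    ultimately show ?thesis
      by (simp only:)
  qed
qed

lemma treewidth_le_induced:
  assumes "graph V E" "treewidth_le V E w" "U \<subseteq> V"
  shows "treewidth_le U (induced E U) w"
proof -
  obtain VT :: "nat set" and ET W where td: "tree_decomposition V E VT ET W"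
    and bags: "\<forall>x\<in>VT. card (W x) \<le> w + 1"
    using assms(2) unfolding treewidth_le_def by blast
  have "card (W x \<inter> U) \<le> w + 1" if "x \<in> VT" for x
  proof -
    have "W x \<subseteq> V"
      using td that unfolding tree_decomposition_def by simp
    then have "finite (W x)"
      using assms(1) finite_subset unfolding graph_def by blast
    then have "card (W x \<inter> U) \<le> card (W x)"
      by (rule card_mono) blast
    then show ?thesis
      using bags that by fastforce
  qed
  then show ?thesis
    using tree_decomposition_induced[OF td assms(3)] unfolding treewidth_le_def by blast
qed

lemma bounded_graph_induced: "bounded_graph V E k d \<Longrightarrow> U \<subseteq> V \<Longrightarrow> bounded_graph U (induced E U) k d"
  unfolding bounded_graph_def using graph_induced max_degree_le_induced treewidth_le_induced by metis

lemma card_neighbours_le: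
  assumes "graph V E" "max_degree_le V E d" "S \<subseteq> V"
  shows "card {x. \<exists>u\<in>S. {u,x} \<in> E} \<le> d * card S"
proof -
  have finS: "finite S"
    using assms finite_subset unfolding graph_def by blast
  have "{x. \<exists>u\<in>S. {u,x} \<in> E} = (\<Union>u\<in>S. {x. {x,u} \<in> E})"
    by (auto simp: insert_commute)
  also have "card \<dots> \<le> (\<Sum>u\<in>S. card {x. {x,u} \<in> E})"
    using card_UN_le[OF finS] .
  also have "\<dots> \<le> (\<Sum>u\<in>S. d)"
  proof (rule sum_mono)
    fix u assume "u \<in> S"
    then show "card {x. {x,u} \<in> E} \<le> d"
      using assms(2,3) unfolding max_degree_le_def degree_def by blast
  qed
  finally show ?thesis
    by (simp add: mult.commute)
qed

section \<open>Rooted tree-partitions\<close>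

lemma degree_image:
  assumes f: "inj f"
  shows "degree ((`) f ` E) (f v) = degree E v"
proof -
  have "{u. {u, f v} \<in> (`) f ` E} = f ` {u. {u,v} \<in> E}"
  proof
    show "f ` {u. {u,v} \<in> E} \<subseteq> {u. {u, f v} \<in> (`) f ` E}"
    proof
      fix x assume "x \<in> f ` {u. {u,v} \<in> E}"
      then obtain a where "x = f a" "{a,v} \<in> E"
        by blast
      moreover have "f ` {a,v} = {f a, f v}"
        by simp
      ultimately show "x \<in> {u. {u, f v} \<in> (`) f ` E}"
        by (metis (mono_tags, lifting) image_eqI mem_Collect_eq)
    qed
    show "{u. {u, f v} \<in> (`) f ` E} \<subseteq> f ` {u. {u,v} \<in> E}"
    proof
      fix x assume "x \<in> {u. {u, f v} \<in> (`) f ` E}"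
      then obtain e where e: "e \<in> E" "{x, f v} = f ` e"
        by blast
      then obtain a where a: "a \<in> e" "x = f a"
        by (metis imageE insertI1)
      have "v \<in> e"
        using e f by (metis inj_image_mem_iff insertI1 insert_commute)
      moreover have "e \<subseteq> {a,v}"
        using e a f by (auto dest: injD)
      ultimately have "e = {a,v}"
        using a by blast
      then show "x \<in> f ` {u. {u,v} \<in> E}"
        using e a by blast
    qed
  qed
  then show ?thesis
    unfolding degree_def using f by (simp add: card_image inj_on_subset)
qed

lemma degree_Un_untouched: "\<forall>e\<in>E2. v \<notin> e \<Longrightarrow> degree (E1 \<union> E2) v = degree E1 v"
proof -
  assume "\<forall>e\<in>E2. v \<notin> e"
  then have "{u. {u,v} \<in> E1 \<union> E2} = {u. {u,v} \<in> E1}"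
    by blast
  then show ?thesis
    unfolding degree_def by simp
qed

lemma degree_Un_le:
  "finite {u. {u,v} \<in> E1} \<Longrightarrow> finite {u. {u,v} \<in> E2} \<Longrightarrow> degree (E1 \<union> E2) v \<le> degree E1 v + degree E2 v"
proof -
  have "{u. {u,v} \<in> E1 \<union> E2} = {u. {u,v} \<in> E1} \<union> {u. {u,v} \<in> E2}"
    by blast
  then show ?thesis
    unfolding degree_def by (simp add: card_Un_le)
qed

definition rooted_tree_partition ::
  "'a set \<Rightarrow> 'a set set \<Rightarrow> nat \<Rightarrow> nat \<Rightarrow> 'b \<Rightarrow> 'b set \<Rightarrow> 'b set set \<Rightarrow> ('b \<Rightarrow> 'a set) \<Rightarrow> bool" where
  "rooted_tree_partition V E w D r VT ET B \<longleftrightarrow>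
     leaf_tree r VT ET \<and> T_partition V E VT ET B \<and> width_le VT B w \<and> max_degree_le VT ET D"

lemma rooted_tree_partition_tree:
  assumes "rooted_tree_partition V E w D r VT ET B"
  shows "r \<in> VT" and "finite {u. {u,v} \<in> ET}" and "e \<in> ET \<Longrightarrow> e \<subseteq> VT"
proof -
  have "r \<in> VT" "graph VT ET"
    using assms leaf_tree_graph[of r VT ET] unfolding rooted_tree_partition_def by simp_all
  then show "r \<in> VT" "finite {u. {u,v} \<in> ET}" "e \<in> ET \<Longrightarrow> e \<subseteq> VT"
    using graph_finite_neighbours[of VT ET v] unfolding graph_def by auto
qed

lemma rooted_tree_partition_bag: "rooted_tree_partition V E w D r VT ET B \<Longrightarrow> x \<in> VT \<Longrightarrow> B x \<subseteq> V"
  unfolding rooted_tree_partition_def T_partition_def by auto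

lemma rooted_tree_partition_single: "card V \<le> w \<Longrightarrow> rooted_tree_partition V E w D r {r} {} (\<lambda>_. V)"
  unfolding rooted_tree_partition_def T_partition_def width_le_def max_degree_le_def degree_def
  by (simp add: leaf_tree.single tree_singleton)

lemma rooted_tree_partition_image:
  assumes P: "rooted_tree_partition V E w D r VT ET B" and f: "inj f"
  shows "rooted_tree_partition V E w D (f r) (f ` VT) ((`) f ` ET) (\<lambda>x. B (inv f x))"
proof -
  have L: "leaf_tree r VT ET" and disj: "\<forall>x\<in>VT. \<forall>y\<in>VT. x \<noteq> y \<longrightarrow> B x \<inter> B y = {}"
    and cover: "(\<Union>x\<in>VT. B x) = V"
    and edges: "\<forall>v u x y. {v,u} \<in> E \<longrightarrow> x \<in> VT \<longrightarrow> y \<in> VT \<longrightarrow> v \<in> B x \<longrightarrow> u \<in> B y \<longrightarrow> x = y \<or> {x,y} \<in> ET"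
    and width: "\<forall>x\<in>VT. card (B x) \<le> w" and deg: "\<forall>x\<in>VT. degree ET x \<le> D"
    using P unfolding rooted_tree_partition_def T_partition_def width_le_def max_degree_le_def by auto
  have L': "leaf_tree (f r) (f ` VT) ((`) f ` ET)"
    using leaf_tree_image[OF L f] .
  have Bf: "B (inv f (f x)) = B x" for x
    using f by simp
  have "T_partition V E (f ` VT) ((`) f ` ET) (\<lambda>x. B (inv f x))"
    unfolding T_partition_def
  proof (intro conjI allI impI ballI)
    show "tree (f ` VT) ((`) f ` ET)"
      using leaf_tree_tree[OF L'] .
    show "B (inv f x') \<inter> B (inv f y') = {}" if xy: "x' \<in> f ` VT" "y' \<in> f ` VT" "x' \<noteq> y'" for x' y'
    proof -
      obtain x y where "x \<in> VT" "y \<in> VT" "x' = f x" "y' = f y"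
        using xy(1,2) by blast
      moreover from this have "x \<noteq> y"
        using xy(3) by blast
      ultimately show ?thesis
        using disj Bf by simp
    qed
    show "(\<Union>x'\<in>f ` VT. B (inv f x')) = V"
      using cover Bf by simp
    show "x' = y' \<or> {x',y'} \<in> (`) f ` ET"
      if vu: "{v,u} \<in> E" "x' \<in> f ` VT" "y' \<in> f ` VT" "v \<in> B (inv f x')" "u \<in> B (inv f y')" for v u x' y'
    proof -
      obtain x y where xy: "x \<in> VT" "y \<in> VT" "x' = f x" "y' = f y"
        using vu(2,3) by blast
      then have "v \<in> B x" "u \<in> B y"
        using vu(4,5) Bf by simp_all
      then have "x = y \<or> {x,y} \<in> ET"
        using edges vu(1) xy(1,2) by blast
      moreover have "{x',y'} = f ` {x,y}"
        using xy(3,4) by simp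
      ultimately show ?thesis
        using xy(3,4) by (metis imageI)
    qed
  qed
  moreover have "width_le (f ` VT) (\<lambda>x. B (inv f x)) w"
    unfolding width_le_def using width Bf by simp
  moreover have "max_degree_le (f ` VT) ((`) f ` ET) D"
    unfolding max_degree_le_def using deg degree_image[OF f] by simp
  ultimately show ?thesis
    unfolding rooted_tree_partition_def using L' by simp
qed

lemma rooted_tree_partition_off_root:
  assumes P: "rooted_tree_partition (A \<union> X) E w D r VT ET B" and "X \<subseteq> B r" "x \<in> VT" "x \<noteq> r"
  shows "B x \<subseteq> A"
proof -
  have "B x \<inter> B r = {}"
    using P assms(3,4) rooted_tree_partition_tree(1)[OF P]
    unfolding rooted_tree_partition_def T_partition_def by blast
  moreover have "B x \<subseteq> A \<union> X"
    using rooted_tree_partition_bag[OF P assms(3)] .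
  ultimately show ?thesis
    using assms(2) by blast
qed

locale glueable_partitions =
  fixes V :: "'a set" and E :: "'a set set" and w D :: nat and r :: 'b and A X C :: "'a set"
    and VT1 :: "'b set" and ET1 :: "'b set set" and B1 :: "'b \<Rightarrow> 'a set"
    and VT2 :: "'b set" and ET2 :: "'b set set" and B2 :: "'b \<Rightarrow> 'a set"
  assumes left: "rooted_tree_partition (A \<union> X) (induced E (A \<union> X)) w D r VT1 ET1 B1"
    and right: "rooted_tree_partition (C \<union> X) (induced E (C \<union> X)) w D r VT2 ET2 B2"
    and common_root: "VT1 \<inter> VT2 = {r}"
    and separation: "separation V E A X C"
    and X_left: "X \<subseteq> B1 r" and X_right: "X \<subseteq> B2 r"
begin

definition bags :: "'b \<Rightarrow> 'a set" where
  "bags x = (if x = r then B1 r \<union> B2 r else if x \<in> VT1 then B1 x else B2 x)"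

lemma sides: "A \<inter> X = {}" "C \<inter> X = {}" "A \<inter> C = {}" "A \<union> X \<union> C = V"
  using separation unfolding separation_def by auto

lemma mem_bags_left:
  assumes "v \<in> A \<union> X" "x \<in> VT1 \<union> VT2"
  shows "v \<in> bags x \<longleftrightarrow> x \<in> VT1 \<and> v \<in> B1 x"
proof (cases "x = r")
  case True
  have "B2 r \<subseteq> C \<union> X"
    using rooted_tree_partition_bag[OF right rooted_tree_partition_tree(1)[OF right]] .
  then have "v \<in> B2 r \<Longrightarrow> v \<in> B1 r"
    using assms(1) sides(3) X_left by blast
  then show ?thesis
    using True rooted_tree_partition_tree(1)[OF left] unfolding bags_def by auto
next
  case False
  then show ?thesis
    using assms rooted_tree_partition_off_root[OF right X_right, of x] sides unfolding bags_def by auto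
qed

lemma mem_bags_right:
  assumes "v \<in> C \<union> X" "x \<in> VT1 \<union> VT2"
  shows "v \<in> bags x \<longleftrightarrow> x \<in> VT2 \<and> v \<in> B2 x"
proof (cases "x = r")
  case True
  have "B1 r \<subseteq> A \<union> X"
    using rooted_tree_partition_bag[OF left rooted_tree_partition_tree(1)[OF left]] .
  then have "v \<in> B1 r \<Longrightarrow> v \<in> B2 r"
    using assms(1) sides(3) X_right by blast
  then show ?thesis
    using True rooted_tree_partition_tree(1)[OF right] unfolding bags_def by auto
next
  case False
  then have "x \<in> VT1 \<Longrightarrow> x \<notin> VT2"
    using common_root by blast
  then show ?thesis
    using False assms rooted_tree_partition_off_root[OF left X_left, of x] sides unfolding bags_def by auto
qed

lemma bags_subset: "x \<in> VT1 \<union> VT2 \<Longrightarrow> bags x \<subseteq> V"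
  using rooted_tree_partition_bag[OF left] rooted_tree_partition_bag[OF right] sides(4)
    rooted_tree_partition_tree(1)[OF left] rooted_tree_partition_tree(1)[OF right]
  unfolding bags_def by (auto split: if_splits)

lemma leaf_tree_union: "leaf_tree r (VT1 \<union> VT2) (ET1 \<union> ET2)"
  using leaf_tree_glue[of r VT2 ET2 r VT1 ET1] common_root left right
  unfolding rooted_tree_partition_def by blast

lemma left_partition: "\<forall>x\<in>VT1. \<forall>y\<in>VT1. x \<noteq> y \<longrightarrow> B1 x \<inter> B1 y = {}" "(\<Union>x\<in>VT1. B1 x) = A \<union> X"
  using left unfolding rooted_tree_partition_def T_partition_def by auto

lemma right_partition: "\<forall>x\<in>VT2. \<forall>y\<in>VT2. x \<noteq> y \<longrightarrow> B2 x \<inter> B2 y = {}" "(\<Union>x\<in>VT2. B2 x) = C \<union> X"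
  using right unfolding rooted_tree_partition_def T_partition_def by auto

lemma bags_disjoint:
  assumes "x \<in> VT1 \<union> VT2" "y \<in> VT1 \<union> VT2" "x \<noteq> y"
  shows "bags x \<inter> bags y = {}"
proof (rule equals0I)
  fix v assume v: "v \<in> bags x \<inter> bags y"
  then have "v \<in> A \<union> X \<or> v \<in> C \<union> X"
    using bags_subset[OF assms(1)] sides(4) by blast
  then show False
    using v assms left_partition(1) right_partition(1) mem_bags_left mem_bags_right by blast
qed

lemma UN_bags: "(\<Union>x\<in>VT1 \<union> VT2. bags x) = V"
proof
  show "(\<Union>x\<in>VT1 \<union> VT2. bags x) \<subseteq> V"
    using bags_subset by blast
  show "V \<subseteq> (\<Union>x\<in>VT1 \<union> VT2. bags x)"
  proof
    fix v assume "v \<in> V"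
    then consider "v \<in> A \<union> X" | "v \<in> C \<union> X"
      using sides(4) by blast
    then show "v \<in> (\<Union>x\<in>VT1 \<union> VT2. bags x)"
    proof cases
      case 1
      then obtain x where "x \<in> VT1" "v \<in> B1 x"
        using left_partition(2) by blast
      then show ?thesis
        using mem_bags_left[OF 1] by blast
    next
      case 2
      then obtain x where "x \<in> VT2" "v \<in> B2 x"
        using right_partition(2) by blast
      then show ?thesis
        using mem_bags_right[OF 2] by blast
    qed
  qed
qed

text \<open>An edge of G lies inside one of the two sides, where the corresponding partition applies.\<close>
lemma bags_edge:
  assumes e: "{v,u} \<in> E" "x \<in> VT1 \<union> VT2" "y \<in> VT1 \<union> VT2" "v \<in> bags x" "u \<in> bags y"
  shows "x = y \<or> {x,y} \<in> ET1 \<union> ET2"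
proof -
  have "v \<in> V" "u \<in> V"
    using bags_subset e by blast+
  moreover have "{u,v} \<in> E"
    using e(1) by (simp add: insert_commute)
  ultimately have "(v \<in> A \<union> X \<and> u \<in> A \<union> X) \<or> (v \<in> C \<union> X \<and> u \<in> C \<union> X)"
    using e(1) separation sides(4) unfolding separation_def by blast
  then show ?thesis
  proof
    assume vu: "v \<in> A \<union> X \<and> u \<in> A \<union> X"
    then have "x \<in> VT1" "y \<in> VT1" "v \<in> B1 x" "u \<in> B1 y" "{v,u} \<in> induced E (A \<union> X)"
      using mem_bags_left e unfolding induced_def by auto
    then show ?thesis
      using left unfolding rooted_tree_partition_def T_partition_def by blast
  next
    assume vu: "v \<in> C \<union> X \<and> u \<in> C \<union> X"
    then have "x \<in> VT2" "y \<in> VT2" "v \<in> B2 x" "u \<in> B2 y" "{v,u} \<in> induced E (C \<union> X)"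
      using mem_bags_right e unfolding induced_def by auto
    then show ?thesis
      using right unfolding rooted_tree_partition_def T_partition_def by blast
  qed
qed

lemma T_partition_bags: "T_partition V E (VT1 \<union> VT2) (ET1 \<union> ET2) bags"
  unfolding T_partition_def using leaf_tree_tree[OF leaf_tree_union] bags_disjoint UN_bags bags_edge
  by blast

lemma degree_root: "degree (ET1 \<union> ET2) r \<le> degree ET1 r + degree ET2 r"
  using rooted_tree_partition_tree(2)[OF left] rooted_tree_partition_tree(2)[OF right] by (rule degree_Un_le)

lemma rooted_tree_partition_bags:
  assumes "card (B1 r \<union> B2 r) \<le> w" "degree ET1 r + degree ET2 r \<le> D"
  shows "rooted_tree_partition V E w D r (VT1 \<union> VT2) (ET1 \<union> ET2) bags"
proof -
  have "width_le (VT1 \<union> VT2) bags w"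
    using left right assms(1) unfolding rooted_tree_partition_def width_le_def bags_def by auto
  moreover have "degree (ET1 \<union> ET2) x \<le> D" if "x \<in> VT1 \<union> VT2" for x
  proof (cases "x = r")
    case True
    from degree_root assms(2) have "degree (ET1 \<union> ET2) r \<le> D"
      by (rule order_trans)
    with True show ?thesis
      by simp
  next
    case False
    have "x \<in> VT1 \<longleftrightarrow> x \<notin> VT2"
      using that False common_root by blast
    then show ?thesis
    proof (cases "x \<in> VT1")
      case True
      with \<open>x \<in> VT1 \<longleftrightarrow> x \<notin> VT2\<close> have 1: "x \<in> VT1" "x \<notin> VT2"
        by simp_all
      then have "degree (ET1 \<union> ET2) x = degree ET1 x"
        using rooted_tree_partition_tree(3)[OF right] by (intro degree_Un_untouched) blast
      then show ?thesis
        using left 1 unfolding rooted_tree_partition_def max_degree_le_def by simp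
    next
      case False
      with \<open>x \<in> VT1 \<longleftrightarrow> x \<notin> VT2\<close> have 2: "x \<in> VT2" "x \<notin> VT1"
        by simp_all
      then have "degree (ET2 \<union> ET1) x = degree ET2 x"
        using rooted_tree_partition_tree(3)[OF left] by (intro degree_Un_untouched) blast
      then show ?thesis
        using right 2 unfolding rooted_tree_partition_def max_degree_le_def by (simp add: Un_commute)
    qed
  qed
  ultimately show ?thesis
    using leaf_tree_union T_partition_bags unfolding rooted_tree_partition_def max_degree_le_def by blast
qed

end

lemma T_partition_add_root:
  assumes P: "T_partition (V - S) (induced E (V - S)) VT ET B" and T: "tree (insert z VT) (insert {z,r} ET)"
    and "z \<notin> VT" "r \<in> VT" "S \<subseteq> V"
    and nbrs: "\<forall>u v. {u,v} \<in> E \<longrightarrow> u \<in> S \<longrightarrow> v \<in> V - S \<longrightarrow> v \<in> B r"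
  shows "T_partition V E (insert z VT) (insert {z,r} ET) (B(z := S))"
proof -
  have disj: "\<forall>x\<in>VT. \<forall>y\<in>VT. x \<noteq> y \<longrightarrow> B x \<inter> B y = {}" and cover: "(\<Union>x\<in>VT. B x) = V - S"
    and edges: "\<forall>v u x y. {v,u} \<in> induced E (V - S) \<longrightarrow> x \<in> VT \<longrightarrow> y \<in> VT \<longrightarrow> v \<in> B x \<longrightarrow> u \<in> B y
      \<longrightarrow> x = y \<or> {x,y} \<in> ET"
    using P unfolding T_partition_def by auto
  have B: "x \<in> VT \<Longrightarrow> B x \<subseteq> V - S" for x
    using cover by blast
  have only_root: "x = r" if "x \<in> VT" "v \<in> B x" "{u,v} \<in> E" "u \<in> S" for x u v
  proof -
    have "v \<in> B r"
      using nbrs that B by blast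
    then show ?thesis
      using disj that(1,2) \<open>r \<in> VT\<close> by blast
  qed
  show ?thesis
    unfolding T_partition_def
  proof (intro conjI allI impI ballI)
    show "tree (insert z VT) (insert {z,r} ET)"
      by (rule T)
    show "(B(z := S)) x \<inter> (B(z := S)) y = {}" if "x \<in> insert z VT" "y \<in> insert z VT" "x \<noteq> y" for x y
      using that disj B \<open>z \<notin> VT\<close> by (cases "x = z"; cases "y = z") auto
    have "(\<Union>x\<in>insert z VT. (B(z := S)) x) = S \<union> (\<Union>x\<in>VT. B x)"
      using \<open>z \<notin> VT\<close> by (auto split: if_splits)
    also have "\<dots> = S \<union> (V - S)"
      by (simp only: cover)
    also have "\<dots> = V"
      using \<open>S \<subseteq> V\<close> by blast
    finally show "(\<Union>x\<in>insert z VT. (B(z := S)) x) = V" .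
    show "x = y \<or> {x,y} \<in> insert {z,r} ET"
      if e: "{v,u} \<in> E" "x \<in> insert z VT" "y \<in> insert z VT" "v \<in> (B(z := S)) x" "u \<in> (B(z := S)) y"
      for v u x y
    proof (cases "x = z"; cases "y = z")
      assume "x = z" "y \<noteq> z"
      then show ?thesis
        using only_root[of y u v] e \<open>z \<notin> VT\<close> by auto
    next
      assume "x \<noteq> z" "y = z"
      then show ?thesis
        using only_root[of x v u] e \<open>z \<notin> VT\<close> by (auto simp: insert_commute)
    next
      assume "x \<noteq> z" "y \<noteq> z"
      then have "x \<in> VT" "y \<in> VT" "v \<in> B x" "u \<in> B y"
        using e by auto
      moreover from this have "{v,u} \<in> induced E (V - S)"
        using e(1) B unfolding induced_def by blast
      ultimately show ?thesis
        using edges by blast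
    qed simp
  qed
qed

lemma rooted_tree_partition_add_root:
  assumes P: "rooted_tree_partition (V - S) (induced E (V - S)) w D r VT ET B"
    and "z \<notin> VT" "S \<subseteq> V" "card S \<le> w" "degree ET r < D"
    and "\<forall>u v. {u,v} \<in> E \<longrightarrow> u \<in> S \<longrightarrow> v \<in> V - S \<longrightarrow> v \<in> B r"
  shows "rooted_tree_partition V E w D z (insert z VT) (insert {z,r} ET) (B(z := S))"
    and "degree (insert {z,r} ET) z = 1"
proof -
  have L: "leaf_tree r VT ET" and "T_partition (V - S) (induced E (V - S)) VT ET B"
    and width: "width_le VT B w" and deg: "max_degree_le VT ET D"
    using P unfolding rooted_tree_partition_def by auto
  have r: "r \<in> VT"
    by (rule rooted_tree_partition_tree(1)[OF P])
  have "leaf_tree z (insert r {z}) (insert {z,r} {})"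
    using leaf_tree.add_leaf[OF leaf_tree.single[of z], of z r] r \<open>z \<notin> VT\<close> by auto
  from leaf_tree_glue[OF L this] have L': "leaf_tree z (insert z VT) (insert {z,r} ET)"
    using r \<open>z \<notin> VT\<close> by (simp add: insert_absorb)
  have "{u. {u,z} \<in> insert {z,r} ET} = {r}"
    using rooted_tree_partition_tree(3)[OF P] r \<open>z \<notin> VT\<close> by (auto simp: doubleton_eq_iff)
  then show deg_z: "degree (insert {z,r} ET) z = 1"
    unfolding degree_def by simp
  have "degree (insert {z,r} ET) x \<le> D" if x: "x \<in> insert z VT" for x
  proof -
    consider "x = z" | "x = r" | "x \<in> VT" "x \<noteq> r" "x \<noteq> z"
      using x by blast
    then show ?thesis
    proof cases
      case 1
      then show ?thesis using deg_z \<open>degree ET r < D\<close> by simp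
    next
      case 2
      have "{u. {u,r} \<in> {{z,r}}} = {z}"
        using r \<open>z \<notin> VT\<close> by (auto simp: doubleton_eq_iff)
      then have "degree ({{z,r}} \<union> ET) r \<le> 1 + degree ET r"
        using degree_Un_le[of r "{{z,r}}" ET] rooted_tree_partition_tree(2)[OF P]
        unfolding degree_def by simp
      then show ?thesis
        using 2 \<open>degree ET r < D\<close> by simp
    next
      case 3
      then have "degree ({{z,r}} \<union> ET) x = degree ET x"
        by (subst Un_commute, intro degree_Un_untouched) auto
      then show ?thesis
        using deg 3 unfolding max_degree_le_def by simp
    qed
  qed
  moreover have "tree (insert z VT) (insert {z,r} ET)"
    using leaf_tree_tree[OF L'] .
  ultimately show "rooted_tree_partition V E w D z (insert z VT) (insert {z,r} ET) (B(z := S))"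
    using L' T_partition_add_root assms width \<open>z \<notin> VT\<close> r
    unfolding rooted_tree_partition_def width_le_def max_degree_le_def by auto
qed

text \<open>Relabel the two trees by even and odd numbers (the odd map n \<mapsto> 2n - 1 sends 0 to 0 by
  truncated subtraction), so that they meet only in the root 0, and glue them there.\<close>
lemma rooted_tree_partition_merge:
  assumes P1: "rooted_tree_partition (A \<union> X) (induced E (A \<union> X)) w D (0::nat) VT1 ET1 B1"
    and P2: "rooted_tree_partition (C \<union> X) (induced E (C \<union> X)) w D (0::nat) VT2 ET2 B2"
    and sep: "separation V E A X C" and "X \<subseteq> B1 0" "X \<subseteq> B2 0"
    and "card (B1 0 \<union> B2 0) \<le> w" "degree ET1 0 + degree ET2 0 \<le> D"
  shows "\<exists>VT ET B. rooted_tree_partition V E w D (0::nat) VT ET B \<and> B 0 = B1 0 \<union> B2 0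
    \<and> degree ET 0 \<le> degree ET1 0 + degree ET2 0"
proof -
  let ?f = "\<lambda>n::nat. 2*n" and ?g = "\<lambda>n::nat. 2*n - 1"
  have inj: "inj ?f" "inj ?g"
    unfolding inj_def by auto
  have roots: "B1 (inv ?f 0) = B1 0" "B2 (inv ?g 0) = B2 0"
    using inv_f_f[OF inj(1), of 0] inv_f_f[OF inj(2), of 0] by simp_all
  interpret glueable_partitions V E w D 0 A X C
    "?f ` VT1" "(`) ?f ` ET1" "\<lambda>x. B1 (inv ?f x)" "?g ` VT2" "(`) ?g ` ET2" "\<lambda>x. B2 (inv ?g x)"
  proof
    show "rooted_tree_partition (A \<union> X) (induced E (A \<union> X)) w D 0 (?f ` VT1) ((`) ?f ` ET1)
        (\<lambda>x. B1 (inv ?f x))"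
      using rooted_tree_partition_image[OF P1 inj(1)] by simp
    show "rooted_tree_partition (C \<union> X) (induced E (C \<union> X)) w D 0 (?g ` VT2) ((`) ?g ` ET2)
        (\<lambda>x. B2 (inv ?g x))"
      using rooted_tree_partition_image[OF P2 inj(2)] by simp
    show "?f ` VT1 \<inter> ?g ` VT2 = {0}"
    proof
      show "{0} \<subseteq> ?f ` VT1 \<inter> ?g ` VT2"
        using rooted_tree_partition_tree(1)[OF P1] rooted_tree_partition_tree(1)[OF P2] by force
      have "2*a = 2*b - 1 \<Longrightarrow> 2*a = 0" for a b :: nat
        by arith
      then show "?f ` VT1 \<inter> ?g ` VT2 \<subseteq> {0}"
        by auto
    qed
    show "separation V E A X C"
      by (rule sep)
    show "X \<subseteq> B1 (inv ?f 0)" "X \<subseteq> B2 (inv ?g 0)"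
      unfolding roots by fact+
  qed
  have degs: "degree ((`) ?f ` ET1) 0 = degree ET1 0" "degree ((`) ?g ` ET2) 0 = degree ET2 0"
    using degree_image[OF inj(1), of ET1 0] degree_image[OF inj(2), of ET2 0] by simp_all
  have "card (B1 (inv ?f 0) \<union> B2 (inv ?g 0)) \<le> w"
    unfolding roots by fact
  moreover have "degree ((`) ?f ` ET1) 0 + degree ((`) ?g ` ET2) 0 \<le> D"
    unfolding degs by fact
  ultimately have "rooted_tree_partition V E w D 0 (?f ` VT1 \<union> ?g ` VT2) ((`) ?f ` ET1 \<union> (`) ?g ` ET2) bags"
    by (rule rooted_tree_partition_bags)
  moreover have "bags 0 = B1 0 \<union> B2 0"
    unfolding bags_def roots by simp
  moreover have "degree ((`) ?f ` ET1 \<union> (`) ?g ` ET2) 0 \<le> degree ET1 0 + degree ET2 0"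
    using degree_root degs by simp
  ultimately show ?thesis
    by blast
qed

section \<open>Anchored tree-partitions\<close>

lemma exists_superset_card_between:
  assumes "finite U" "N \<subseteq> U" "card N \<le> b" "a \<le> b" "a \<le> card U"
  shows "\<exists>S. N \<subseteq> S \<and> S \<subseteq> U \<and> a \<le> card S \<and> card S \<le> b"
proof (cases "a \<le> card N")
  case True
  then show ?thesis
    using assms by blast
next
  case False
  have finN: "finite N"
    using assms(1,2) finite_subset by blast
  then have "card U = card (U - N) + card N"
    using assms(2) by (metis card_Diff_subset card_mono le_add_diff_inverse2 assms(1))
  then have "a - card N \<le> card (U - N)"
    using assms(5) by linarith
  then obtain Y where Y: "Y \<subseteq> U - N" "card Y = a - card N"
    by (rule obtain_subset_with_card_n)
  then have "card (N \<union> Y) = a"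
    using False finN card_Un_disjoint[of N Y] finite_subset[OF _ finite_Diff[OF assms(1)]] by auto
  then show ?thesis
    using Y assms(2,4) by (intro exI[of _ "N \<union> Y"]) auto
qed

lemma bounded_graph_balanced_separation:
  assumes "bounded_graph V E k d" "k \<ge> 1" "S \<subseteq> V" "10 * k \<le> card S"
  shows "\<exists>X A C. X \<subseteq> V \<and> card X = k \<and> separation V E A X C \<and> 3*k \<le> card (S \<inter> A) \<and> 3*k \<le> card (S \<inter> C)"
proof -
  obtain VT :: "nat set" and ET W where td: "tree_decomposition V E VT ET W"
    and bags: "\<forall>x\<in>VT. card (W x) \<le> k - 1 + 1"
    using assms(1) unfolding bounded_graph_def treewidth_le_def by blast
  interpret tree_decomposed_graph V E VT ET W
    by unfold_locales (rule td)
  have finV: "finite V"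
    using assms(1) unfolding bounded_graph_def graph_def by simp
  then obtain x where x: "x \<in> VT" and half: "\<forall>y. {x,y} \<in> ET \<longrightarrow> 2 * card (S \<inter> part x y) \<le> card S"
    using balanced_node finite_subset[OF assms(3)] by blast
  have "W x \<subseteq> V"
    using td x unfolding tree_decomposition_def by simp
  moreover have "card (W x) \<le> k"
    using bags x assms(2) by simp
  ultimately show ?thesis
    using balanced_separation[OF parts_separation_at[OF x] finV _ _ assms(2) _ assms(3,4)] half by simp
qed

text \<open>The root 0 plays the role of the node z of the theorem; its two bounds appear with the
  denominators cleared.\<close>
definition anchored_tree_partition :: "'a set \<Rightarrow> 'a set set \<Rightarrow> nat \<Rightarrow> nat \<Rightarrow> 'a set \<Rightarrow> bool" where
  "anchored_tree_partition V E k d S \<longleftrightarrow> (\<exists>VT ET B. rooted_tree_partition V E (18*k*d) (6*d) (0::nat) VT ET B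
     \<and> S \<subseteq> B 0 \<and> 2 * card (B 0) + 4*k \<le> 3 * card S \<and> 2*k*(degree ET 0 + 1) \<le> card S)"

lemma degree_bound_from_anchor:
  fixes k s t d :: nat
  assumes "2*k*(t + 1) \<le> s" "s \<le> 12*k*d" "k \<ge> 1"
  shows "t < 6*d"
proof -
  have "(2*k) * (t + 1) \<le> (2*k) * (6*d)"
    using assms(1,2) by (simp add: mult.assoc)
  then show ?thesis
    using assms(3) unfolding mult_le_cancel1 by simp
qed

lemma rooted_tree_partition_containing:
  assumes IH: "\<And>S. S \<subseteq> V \<Longrightarrow> 4*k \<le> card S \<Longrightarrow> card S \<le> 12*k*d \<Longrightarrow> anchored_tree_partition V E k d S"
    and "finite V" "N \<subseteq> V" "card N \<le> 12*k*d" "k \<ge> 1" "d \<ge> 1"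
  shows "\<exists>VT ET B. rooted_tree_partition V E (18*k*d) (6*d) (0::nat) VT ET B \<and> N \<subseteq> B 0 \<and> degree ET 0 < 6*d"
proof (cases "card V < 4*k")
  case True
  moreover have "k \<le> k*d"
    using \<open>d \<ge> 1\<close> by simp
  ultimately have "card V \<le> 18*(k*d)"
    by linarith
  then have "card V \<le> 18*k*d"
    by (simp add: mult.assoc)
  then have "rooted_tree_partition V E (18*k*d) (6*d) (0::nat) {0} {} (\<lambda>_. V)"
    by (rule rooted_tree_partition_single)
  moreover have "degree ({} :: nat set set) 0 = 0"
    unfolding degree_def by simp
  ultimately show ?thesis
    using assms(3,6) by fastforce
next
  case False
  have "4*k \<le> 12*k*d" "4*k \<le> card V"
    using \<open>d \<ge> 1\<close> False by simp_all
  then obtain S where S: "N \<subseteq> S" "S \<subseteq> V" "4*k \<le> card S" "card S \<le> 12*k*d"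
    using exists_superset_card_between[OF assms(2,3,4)] by blast
  then obtain VT ET B where P: "rooted_tree_partition V E (18*k*d) (6*d) (0::nat) VT ET B"
    and "S \<subseteq> B 0" and deg: "2*k*(degree ET 0 + 1) \<le> card S"
    using IH unfolding anchored_tree_partition_def by blast
  then have "degree ET 0 < 6*d"
    using degree_bound_from_anchor S(4) \<open>k \<ge> 1\<close> by blast
  then show ?thesis
    using P \<open>S \<subseteq> B 0\<close> S(1) by blast
qed

lemma anchored_tree_partition_small_anchor:
  assumes IH: "\<And>S'. S' \<subseteq> V - S \<Longrightarrow> 4*k \<le> card S' \<Longrightarrow> card S' \<le> 12*k*d
      \<Longrightarrow> anchored_tree_partition (V - S) (induced E (V - S)) k d S'"
    and G: "bounded_graph V E k d" and "k \<ge> 1" "d \<ge> 1" "S \<subseteq> V" "4*k \<le> card S" "card S \<le> 12*k"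
  shows "anchored_tree_partition V E k d S"
proof -
  have finV: "finite V" and g: "graph V E" and deg: "max_degree_le V E d"
    using G unfolding bounded_graph_def graph_def by auto
  have "12*k \<le> 12*k*d" "12*k*d \<le> 18*k*d"
    using \<open>d \<ge> 1\<close> by simp_all
  then have "card S \<le> 18*k*d"
    using \<open>card S \<le> 12*k\<close> by linarith
  define N where "N = {x\<in>V - S. \<exists>u\<in>S. {u,x} \<in> E}"
  have "{x. \<exists>u\<in>S. {u,x} \<in> E} \<subseteq> V"
    using graph_edge_ends[OF g] by blast
  then have "card N \<le> card {x. \<exists>u\<in>S. {u,x} \<in> E}"
    unfolding N_def using finite_subset[OF _ finV] by (intro card_mono) auto
  also have "\<dots> \<le> d * card S"
    using card_neighbours_le[OF g deg \<open>S \<subseteq> V\<close>] .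
  also have "\<dots> \<le> 12*k*d"
    using \<open>card S \<le> 12*k\<close> by simp
  finally have "card N \<le> 12*k*d" .
  moreover have "N \<subseteq> V - S" "finite (V - S)"
    unfolding N_def using finV by auto
  ultimately obtain VT ET B where P: "rooted_tree_partition (V - S) (induced E (V - S)) (18*k*d) (6*d) (0::nat) VT ET B"
    and "N \<subseteq> B 0" and "degree ET 0 < 6*d"
    using rooted_tree_partition_containing[OF IH _ _ _ \<open>k \<ge> 1\<close> \<open>d \<ge> 1\<close>] by blast
  txt \<open>Shift the tree by one to make room for a new root 0 carrying the bag S.\<close>
  let ?B = "\<lambda>x. B (inv Suc x)"
  have P': "rooted_tree_partition (V - S) (induced E (V - S)) (18*k*d) (6*d) (Suc 0) (Suc ` VT) ((`) Suc ` ET) ?B"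
    using rooted_tree_partition_image[OF P inj_Suc] by simp
  moreover have "?B (Suc 0) = B 0"
    by (simp add: inv_f_f[OF inj_Suc])
  then have "\<forall>u v. {u,v} \<in> E \<longrightarrow> u \<in> S \<longrightarrow> v \<in> V - S \<longrightarrow> v \<in> ?B (Suc 0)"
    using \<open>N \<subseteq> B 0\<close> unfolding N_def by blast
  moreover have "degree ((`) Suc ` ET) (Suc 0) < 6*d"
    using degree_image[OF inj_Suc, of ET 0] \<open>degree ET 0 < 6*d\<close> by simp
  moreover have "(0::nat) \<notin> Suc ` VT"
    by blast
  ultimately have "rooted_tree_partition V E (18*k*d) (6*d) 0 (insert 0 (Suc ` VT)) (insert {0, Suc 0} ((`) Suc ` ET)) (?B(0 := S))"
    and "degree (insert {0, Suc 0} ((`) Suc ` ET)) 0 = 1"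
    using rooted_tree_partition_add_root[of V S E "18*k*d" "6*d" "Suc 0" "Suc ` VT" "(`) Suc ` ET" ?B 0]
      \<open>S \<subseteq> V\<close> \<open>card S \<le> 18*k*d\<close> by blast+
  then show ?thesis
    unfolding anchored_tree_partition_def using \<open>4*k \<le> card S\<close> by fastforce
qed

lemma separation_card_sides:
  assumes "separation V E A X C" "finite V" "S \<subseteq> V" "card X = k"
  shows "card (S \<inter> A \<union> X) = card (S \<inter> A) + k" "card (S \<inter> C \<union> X) = card (S \<inter> C) + k"
    and "card (S \<inter> A) + card (S \<inter> C) \<le> card S"
proof -
  have sides: "A \<inter> X = {}" "C \<inter> X = {}" "A \<inter> C = {}" "A \<union> X \<union> C = V"
    using assms(1) unfolding separation_def by auto
  have fin: "finite A" "finite X" "finite C" "finite S"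
    using sides(4) assms(2,3) finite_subset by auto
  show "card (S \<inter> A \<union> X) = card (S \<inter> A) + k" "card (S \<inter> C \<union> X) = card (S \<inter> C) + k"
    using card_Un_disjoint[of "S \<inter> A" X] card_Un_disjoint[of "S \<inter> C" X] fin sides assms(4) by auto
  have "S \<inter> A \<inter> (S \<inter> C) = {}"
    using sides(3) by blast
  then have "card (S \<inter> A) + card (S \<inter> C) = card (S \<inter> A \<union> S \<inter> C)"
    using card_Un_disjoint[of "S \<inter> A" "S \<inter> C"] fin by simp
  also have "\<dots> \<le> card S"
    using fin by (intro card_mono) auto
  finally show "card (S \<inter> A) + card (S \<inter> C) \<le> card S" .
qed

lemma anchored_tree_partition_merge:
  assumes left: "anchored_tree_partition (A \<union> X) (induced E (A \<union> X)) k d (S \<inter> A \<union> X)"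
    and right: "anchored_tree_partition (C \<union> X) (induced E (C \<union> X)) k d (S \<inter> C \<union> X)"
    and sep: "separation V E A X C" and "card X = k" "finite V" "S \<subseteq> V" "card S \<le> 12*k*d" "k \<ge> 1"
  shows "anchored_tree_partition V E k d S"
proof -
  obtain VT1 ET1 B1 where P1: "rooted_tree_partition (A \<union> X) (induced E (A \<union> X)) (18*k*d) (6*d) (0::nat) VT1 ET1 B1"
    and S1: "S \<inter> A \<union> X \<subseteq> B1 0" "2 * card (B1 0) + 4*k \<le> 3 * card (S \<inter> A \<union> X)"
      "2*k*(degree ET1 0 + 1) \<le> card (S \<inter> A \<union> X)"
    using left unfolding anchored_tree_partition_def by blast
  obtain VT2 ET2 B2 where P2: "rooted_tree_partition (C \<union> X) (induced E (C \<union> X)) (18*k*d) (6*d) (0::nat) VT2 ET2 B2"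
    and S2: "S \<inter> C \<union> X \<subseteq> B2 0" "2 * card (B2 0) + 4*k \<le> 3 * card (S \<inter> C \<union> X)"
      "2*k*(degree ET2 0 + 1) \<le> card (S \<inter> C \<union> X)"
    using right unfolding anchored_tree_partition_def by blast
  have card_S12: "card (S \<inter> A \<union> X) = card (S \<inter> A) + k" "card (S \<inter> C \<union> X) = card (S \<inter> C) + k"
    and card_S: "card (S \<inter> A) + card (S \<inter> C) \<le> card S"
    using separation_card_sides[OF sep \<open>finite V\<close> \<open>S \<subseteq> V\<close> \<open>card X = k\<close>] by auto
  have deg_S: "2*k*(degree ET1 0 + degree ET2 0 + 1) \<le> card S"
    using S1(3) S2(3) card_S12 card_S by (simp add: algebra_simps)
  then have deg: "degree ET1 0 + degree ET2 0 < 6*d"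
    using degree_bound_from_anchor \<open>card S \<le> 12*k*d\<close> \<open>k \<ge> 1\<close> by blast
  have "B1 0 \<subseteq> V" "B2 0 \<subseteq> V"
    using rooted_tree_partition_bag[OF P1 rooted_tree_partition_tree(1)[OF P1]]
      rooted_tree_partition_bag[OF P2 rooted_tree_partition_tree(1)[OF P2]] sep
    unfolding separation_def by auto
  then have "finite (B1 0)" "finite (B2 0)"
    using \<open>finite V\<close> finite_subset by blast+
  moreover have "X \<subseteq> B1 0 \<inter> B2 0"
    using S1(1) S2(1) by blast
  ultimately have "k \<le> card (B1 0 \<inter> B2 0)" "card (B1 0 \<union> B2 0) + card (B1 0 \<inter> B2 0) = card (B1 0) + card (B2 0)"
    using card_mono[of "B1 0 \<inter> B2 0" X] card_Un_Int[of "B1 0" "B2 0"] \<open>card X = k\<close> by auto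
  then have root_bag: "2 * card (B1 0 \<union> B2 0) + 4*k \<le> 3 * card S"
    using S1(2) S2(2) card_S12 card_S by linarith
  then have "card (B1 0 \<union> B2 0) \<le> 18*k*d"
    using \<open>card S \<le> 12*k*d\<close> by linarith
  then obtain VT ET B where P: "rooted_tree_partition V E (18*k*d) (6*d) (0::nat) VT ET B"
    and B: "B 0 = B1 0 \<union> B2 0" and "degree ET 0 \<le> degree ET1 0 + degree ET2 0"
    using rooted_tree_partition_merge[OF P1 P2 sep] S1(1) S2(1) deg by (metis le_sup_iff less_imp_le)
  then have "2*k*(degree ET 0 + 1) \<le> 2*k*(degree ET1 0 + degree ET2 0 + 1)"
    by (intro mult_le_mono2) simp
  then have "2*k*(degree ET 0 + 1) \<le> card S"
    using deg_S by (rule le_trans)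
  moreover have "S \<subseteq> B 0"
    using S1(1) S2(1) \<open>S \<subseteq> V\<close> sep B unfolding separation_def by blast
  ultimately show ?thesis
    unfolding anchored_tree_partition_def using P root_bag B
    by (intro exI[of _ VT] exI[of _ ET] exI[of _ B]) simp
qed

lemma anchored_tree_partition_large_anchor:
  assumes IH: "\<And>V' S'. V' \<subset> V \<Longrightarrow> S' \<subseteq> V' \<Longrightarrow> 4*k \<le> card S' \<Longrightarrow> card S' \<le> 12*k*d
      \<Longrightarrow> anchored_tree_partition V' (induced E V') k d S'"
    and G: "bounded_graph V E k d" and "k \<ge> 1" "S \<subseteq> V" "10*k \<le> card S" "card S \<le> 12*k*d"
  shows "anchored_tree_partition V E k d S"
proof -
  have finV: "finite V"
    using G unfolding bounded_graph_def graph_def by simp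
  obtain X A C where "X \<subseteq> V" "card X = k" and sep: "separation V E A X C"
    and large: "3*k \<le> card (S \<inter> A)" "3*k \<le> card (S \<inter> C)"
    using bounded_graph_balanced_separation[OF G \<open>k \<ge> 1\<close> \<open>S \<subseteq> V\<close> \<open>10*k \<le> card S\<close>] by blast
  have sides: "A \<inter> X = {}" "C \<inter> X = {}" "A \<inter> C = {}" "A \<union> X \<union> C = V"
    using sep unfolding separation_def by auto
  note cards = separation_card_sides[OF sep finV \<open>S \<subseteq> V\<close> \<open>card X = k\<close>]
  have "S \<inter> C \<noteq> {}" "S \<inter> A \<noteq> {}"
    using large \<open>k \<ge> 1\<close> by auto
  then have sub: "A \<union> X \<subset> V" "C \<union> X \<subset> V"
    using sides by blast+
  have bounds: "4*k \<le> card (S \<inter> A \<union> X)" "card (S \<inter> A \<union> X) \<le> 12*k*d"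
    "4*k \<le> card (S \<inter> C \<union> X)" "card (S \<inter> C \<union> X) \<le> 12*k*d"
    using cards large \<open>card S \<le> 12*k*d\<close> by linarith+
  have "S \<inter> A \<union> X \<subseteq> A \<union> X" "S \<inter> C \<union> X \<subseteq> C \<union> X"
    by blast+
  then show ?thesis
    using anchored_tree_partition_merge[OF IH[OF sub(1) _ bounds(1,2)] IH[OF sub(2) _ bounds(3,4)]
        sep \<open>card X = k\<close> finV \<open>S \<subseteq> V\<close> \<open>card S \<le> 12*k*d\<close> \<open>k \<ge> 1\<close>]
    by blast
qed

lemma anchored_tree_partition_exists:
  assumes "bounded_graph V E k d" "k \<ge> 1" "d \<ge> 1" "S \<subseteq> V" "4*k \<le> card S" "card S \<le> 12*k*d"
  shows "anchored_tree_partition V E k d S"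
  using assms
proof (induction "card V" arbitrary: V E S rule: less_induct)
  case less
  have finV: "finite V"
    using less.prems(1) unfolding bounded_graph_def graph_def by simp
  have IH: "anchored_tree_partition V' (induced E V') k d S'"
    if "V' \<subset> V" "S' \<subseteq> V'" "4*k \<le> card S'" "card S' \<le> 12*k*d" for V' S'
  proof -
    have "card V' < card V"
      using psubset_card_mono[OF finV \<open>V' \<subset> V\<close>] .
    moreover have "bounded_graph V' (induced E V') k d"
      using bounded_graph_induced less.prems(1) \<open>V' \<subset> V\<close> by blast
    ultimately show ?thesis
      using less.hyps less.prems(2,3) that(2-4) by blast
  qed
  show ?case
  proof (cases "card S \<le> 12*k")
    case True
    have "S \<noteq> {}"
      using less.prems(2,5) by auto
    then have "V - S \<subset> V"
      using less.prems(4) by blast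
    show ?thesis
    proof (rule anchored_tree_partition_small_anchor)
      show "anchored_tree_partition (V - S) (induced E (V - S)) k d S'"
        if "S' \<subseteq> V - S" "4*k \<le> card S'" "card S' \<le> 12*k*d" for S'
        using IH[OF \<open>V - S \<subset> V\<close> that] .
    qed (use less.prems True in auto)
  next
    case False
    then have "10*k \<le> card S"
      by simp
    then show ?thesis
      using anchored_tree_partition_large_anchor[OF IH less.prems(1,2,4) _ less.prems(6)] by simp
  qed
qed

lemma tree_partition_exists:
  assumes "bounded_graph V E k d" "k \<ge> 1" "d \<ge> 1"
  shows "\<exists>(VT::nat set) ET B. T_partition V E VT ET B \<and> width_le VT B (18*k*d) \<and> max_degree_le VT ET (6*d)"
proof (cases "4*k \<le> card V")
  case True
  then obtain S where "S \<subseteq> V" "card S = 4*k"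
    by (rule obtain_subset_with_card_n)
  moreover have "4*k \<le> 12*k*d"
    using \<open>d \<ge> 1\<close> by simp
  ultimately have "anchored_tree_partition V E k d S"
    using anchored_tree_partition_exists[OF assms] by simp
  then show ?thesis
    unfolding anchored_tree_partition_def rooted_tree_partition_def by blast
next
  case False
  moreover have "4*k \<le> 18*k*d"
    using \<open>d \<ge> 1\<close> by simp
  ultimately have "card V \<le> 18*k*d"
    by linarith
  then have "rooted_tree_partition V E (18*k*d) (6*d) (0::nat) {0} {} (\<lambda>_. V)"
    by (rule rooted_tree_partition_single)
  then show ?thesis
    unfolding rooted_tree_partition_def by blast
qed

lemma anchored_tree_partition_real_bounds:
  assumes "anchored_tree_partition V E k d S" "k \<ge> 1"
  shows "\<exists>(VT::nat set) ET B. T_partition V E VT ET B \<and> width_le VT B (18*k*d) \<and> max_degree_le VT ET (6*d)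
    \<and> (\<exists>z\<in>VT. S \<subseteq> B z \<and> real (card (B z)) \<le> 3 / 2 * real (card S) - 2 * real k
      \<and> real (degree ET z) \<le> real (card S) / (2 * real k) - 1)"
proof -
  obtain VT ET B where P: "rooted_tree_partition V E (18*k*d) (6*d) (0::nat) VT ET B"
    and "S \<subseteq> B 0" and bag: "2 * card (B 0) + 4*k \<le> 3 * card S"
    and deg: "2*k*(degree ET 0 + 1) \<le> card S"
    using assms(1) unfolding anchored_tree_partition_def by blast
  have "real (card (B 0)) \<le> 3 / 2 * real (card S) - 2 * real k"
    using bag by linarith
  moreover have "(real (degree ET 0) + 1) * (2 * real k) \<le> real (card S)"
    using of_nat_mono[OF deg] by (simp add: algebra_simps)
  then have "real (degree ET 0) + 1 \<le> real (card S) / (2 * real k)"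
    using \<open>k \<ge> 1\<close> by (simp add: pos_le_divide_eq)
  ultimately show ?thesis
    using P \<open>S \<subseteq> B 0\<close> rooted_tree_partition_tree(1)[OF P] unfolding rooted_tree_partition_def
    by (intro exI[of _ VT] exI[of _ ET] exI[of _ B]) force
qed

theorem lemma3:
  fixes V :: "'a set" and E :: "'a set set" and k d :: nat
  assumes "k \<ge> 1" and "d \<ge> 1"
    and "graph V E"
    and "treewidth_le V E (k - 1)"
    and "max_degree_le V E d"
  shows "(\<exists>(VT::nat set) ET B. T_partition V E VT ET B \<and> width_le VT B (18 * k * d)
            \<and> max_degree_le VT ET (6 * d))
       \<and> (\<forall>S. S \<subseteq> V \<longrightarrow> 4 * k \<le> card S \<longrightarrow> card S \<le> 12 * k * d \<longrightarrow>
            (\<exists>(VT::nat set) ET B. T_partition V E VT ET B \<and> width_le VT B (18 * k * d)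
               \<and> max_degree_le VT ET (6 * d)
               \<and> (\<exists>z\<in>VT. S \<subseteq> B z
                    \<and> real (card (B z)) \<le> 3 / 2 * real (card S) - 2 * real k
                    \<and> real (degree ET z) \<le> real (card S) / (2 * real k) - 1)))"
proof -
  have G: "bounded_graph V E k d"
    unfolding bounded_graph_def using assms by simp
  show ?thesis
  proof (intro conjI allI impI)
    show "\<exists>(VT::nat set) ET B. T_partition V E VT ET B \<and> width_le VT B (18 * k * d)
        \<and> max_degree_le VT ET (6 * d)"
      using tree_partition_exists[OF G assms(1,2)] .
    fix S assume "S \<subseteq> V" "4 * k \<le> card S" "card S \<le> 12 * k * d"
    with anchored_tree_partition_exists[OF G assms(1,2)] have "anchored_tree_partition V E k d S"
      by blast
    then show "\<exists>(VT::nat set) ET B. T_partition V E VT ET B \<and> width_le VT B (18 * k * d)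
        \<and> max_degree_le VT ET (6 * d) \<and> (\<exists>z\<in>VT. S \<subseteq> B z
          \<and> real (card (B z)) \<le> 3 / 2 * real (card S) - 2 * real k
          \<and> real (degree ET z) \<le> real (card S) / (2 * real k) - 1)"
      by (rule anchored_tree_partition_real_bounds[OF _ assms(1)])
  qed
qed

end
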